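(* Let the sequences be generated by Algorithm iMBA and suppose Assumptions 2, 3 and 4 hold. Then there exist $\widehat k\in\mathbb{N}$ and $\beta_{\overline\lambda}>0$ such that for each $k\ge\widehat k$ there is a vector $\overline\lambda^k\in\mathcal M(u^k,\overline x^k)$ with $\|\overline\lambda^k\|\le\beta_{\overline\lambda}$.
   Context: Problem (P): $\min_{x\in\mathbb{R}^n}F(x):=g_0(x)+\delta_{\mathbb{R}^m_-}(g(x))+\phi(x)$, where $g=(g_1,\dots,g_m)^\top$ and $\delta_{\mathbb{R}^m_-}$ is the indicator of the nonpositive orthant. Assumption 1 (standing): (i) $g_0:\mathbb{R}^n\to(-\infty,\infty]$ is locally Lipschitz and upper-$\mathcal C^2$ at every point of an open convex set $\mathcal O\supset\Gamma:=\{x:g(x)\in\mathbb{R}^m_-\}\neq\emptyset$, and each $g_i:\mathbb{R}^n\to\mathbb{R}$, $i\in[m]$, is locally Lipschitz and upper-$\mathcal C^2$ at every point of $\mathbb{R}^n$; (ii) $\phi:\mathbb{R}^n\to\mathbb{R}$ is convex and $F$ is bounded below on $\Gamma$. $\partial$ denotes the limiting subdifferential; $\partial g(x):=\{V\in\mathbb{R}^{n\times m}: V_i\in\partial g_i(x)\ \forall i\}$. Define $G(x,s,V,L):=g(s)+V^\top(x-s)+\tfrac12\|x-s\|^2L$. Algorithm iMBA (parameters $0<\mu_{\min}\le\mu_{\max}$, $0<L_{\min}\le L_{\max}$, $M,\beta_C,\beta_S,\alpha>0$, $\tau>1$, $x^0\in\Gamma$): at iteration $k$ choose $\xi^k\in\partial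 g_0(x^k)$, $V^k\in\partial g(x^k)$, $\mu_{k,0}\in[\mu_{\min},\mu_{\max}]$, $L^{k,0}\in[L_{\min},L_{\max}]^m$; for $j=0,1,\dots$ choose self-adjoint $\mathcal Q_{k,j}$ with $\mu_{k,j}\mathcal I\preceq\mathcal Q_{k,j}\preceq(\mu_{k,j}+M)\mathcal I$, let $F_{k,j}(x):=g_0(x^k)+\langle\xi^k,x-x^k\rangle+\frac12\langle x-x^k,\mathcal Q_{k,j}(x-x^k)\rangle+\phi(x)$, $\Gamma_{k,j}:=\{x:G(x,x^k,V^k,L^{k,j})\in\mathbb{R}^m_-\}$, $\overline x^{k,j}$ the unique minimizer of $F_{k,j}$ on $\Gamma_{k,j}$, and compute $y^{k,j}$, $v^{k,j}\in\partial\phi(y^{k,j})$, $\lambda^{k,j}\in\mathbb{R}^m_+$ with $F_{k,j}(y^{k,j})\le F_{k,j}(x^k)$, $(-\langle\lambda^{k,j},G(y^{k,j},x^k,V^k,L^{k,j})\rangle)_++\|[G(y^{k,j},x^k,V^k,L^{k,j})]_+\|_\infty\le\frac{\beta_C}2\|y^{k,j}-x^k\|^2$ and $\|\xi^k+\mathcal Q_{k,j}(y^{k,j}-x^k)+v^{k,j}+V^k\lambda^{k,j}+\langle L^{k,j},\lambda^{k,j}\rangle(y^{k,j}-x^k)\|\le\beta_S\|y^{k,j}-x^k\|$. If $g(y^{k,j})\in\mathbb{R}^m_-$ and $F(y^{k,j})\le F(x^k)-\frac\alpha2\|y^{k,j}-x^k\|^2$, accept ($j_k:=j$); else if $g(y^{k,j})\notin\mathbb{R}^m_-$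 set $L^{k,j+1}=\tau L^{k,j}$, $\mu_{k,j+1}=\mu_{k,j}$; else $L^{k,j+1}=L^{k,j}$, $\mu_{k,j+1}=\tau\mu_{k,j}$. Then $x^{k+1}:=y^{k,j_k}$, $(\mu_k,\mathcal Q_k,L^k,v^{k+1},\lambda^{k+1}):=(\mu_{k,j_k},\mathcal Q_{k,j_k},L^{k,j_k},v^{k,j_k},\lambda^{k,j_k})$, $\overline x^k:=\overline x^{k,j_k}$. Assumption 2: for each $k,j$, the multifunction $x\mapsto G(x,x^k,V^k,L^{k,j})-\mathbb{R}^m_-$ is metrically subregular at $(\overline x^{k,j},0)$. Assumption 3: $\{x^k\}$ is bounded; $\omega(x^0)$ denotes its set of cluster points. Parametric data: $\mathbb U:=\mathbb{R}^n\times\mathbb{R}^m_+\times\mathbb{R}^{n\times m}\times\mathbb{R}^n\times\mathbb S_+$ ($\mathbb S_+$ = positive semidefinite self-adjoint linear maps on $\mathbb{R}^n$); for $u=(s,L,V,\xi,\mathcal Q)$: $\theta(u,x):=g_0(s)+\langle\xi,x-s\rangle+\frac12\langle x-s,\mathcal Q(x-s)\rangle$, $H(u,x):=G(x,s,V,L)$, so $\nabla_xH(u,x)\lambda=V\lambda+\langle L,\lambda\rangle(x-s)$; $\mathcal S(u):=\{x:H(u,x)\in\mathbb{R}^m_-\}$; $\Lambda(u,x,y):=\{\lambda\in\mathcal N_{\mathbb{R}^m_-}(H(u,x)):\nabla_xH(u,x)\lambda=y\}$; $\mathcal M(u,x):=\{\lambda\in\mathcal N_{\mathbb{R}^m_-}(H(u,x)):0\in\nabla_x\theta(u,x)+\partial\phi(x)+\nabla_xH(u,x)\lambda\}$.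 The constraint system satisfies the partial bounded multiplier property (BMP) w.r.t. $x$ at $(u^*,x^* )$ with $x^*\in\mathcal S(u^* )$ if there exist $\kappa>0$ and a neighborhood $\mathcal U\times\mathcal V$ of $(u^*,x^* )$ such that for all $u\in\mathcal U$, $x\in\mathcal V\cap\mathcal S(u)$ and $y\in\mathcal N_{\mathcal S(u)}(x)$, $\Lambda(u,x,y)\cap\{\lambda:\|\lambda\|\le\kappa\|y\|\}\neq\emptyset$. Let $u^k:=(x^k,L^k,V^k,\xi^k,\mathcal Q_k)$. Assumption 4: the partial BMP w.r.t. $x$ holds at every cluster point of $\{(u^k,\overline x^k)\}_{k\in\mathbb{N}}$. *)

theory Defs
  imports "HOL-Analysis.Analysis"
begin

definition regular_subdiff :: "('a::real_inner \<Rightarrow> real) \<Rightarrow> 'a \<Rightarrow> 'a set" where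
  "regular_subdiff f x = {v. \<forall>e>0. \<exists>d>0. \<forall>z. dist z x < d \<longrightarrow>
       f x + inner v (z - x) - e * norm (z - x) \<le> f z}"

definition limiting_subdiff :: "('a::real_inner \<Rightarrow> real) \<Rightarrow> 'a \<Rightarrow> 'a set" where
  "limiting_subdiff f x = {v. \<exists>xs vs. xs \<longlonglongrightarrow> x \<and> (\<lambda>k. f (xs k)) \<longlonglongrightarrow> f x \<and>
       (\<forall>k. vs k \<in> regular_subdiff f (xs k)) \<and> vs \<longlonglongrightarrow> v}"

definition regular_normal_cone :: "'a::real_inner set \<Rightarrow> 'a \<Rightarrow> 'a set" where
  "regular_normal_cone C x = (if x \<in> C then {v. \<forall>e>0. \<exists>d>0. \<forall>z\<in>C. dist z x < d \<longrightarrow>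
       inner v (z - x) \<le> e * norm (z - x)} else {})"

definition limiting_normal_cone :: "'a::real_inner set \<Rightarrow> 'a \<Rightarrow> 'a set" where
  "limiting_normal_cone C x = (if x \<in> C then {v. \<exists>xs vs. (\<forall>k. xs k \<in> C) \<and> xs \<longlonglongrightarrow> x \<and>
       (\<forall>k. vs k \<in> regular_normal_cone C (xs k)) \<and> vs \<longlonglongrightarrow> v} else {})"

definition metrically_subregular :: "('a::metric_space \<Rightarrow> 'b::metric_space set) \<Rightarrow> 'a \<Rightarrow> 'b \<Rightarrow> bool" where
  "metrically_subregular Phi xb yb \<longleftrightarrow> yb \<in> Phi xb \<and>
     (\<exists>\<kappa>>0. \<exists>\<epsilon>>0. \<forall>x\<in>ball xb \<epsilon>. infdist x {z. yb \<in> Phi z} \<le> \<kappa> * infdist yb (Phi x))"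

definition loc_lipschitz_on :: "'a::metric_space set \<Rightarrow> ('a \<Rightarrow> 'b::metric_space) \<Rightarrow> bool" where
  "loc_lipschitz_on S f \<longleftrightarrow> (\<forall>x\<in>S. \<exists>e>0. \<exists>K. K-lipschitz_on (ball x e) f)"

text \<open>Upper-C2 at a point: locally a pointwise minimum over a compact index set T of
  C2 functions whose values, gradients and Hessians depend jointly continuously on (x,t).
  (The index set is taken as a compact subset of R^n x R^n, which suffices.)\<close>
definition upper_C2_at :: "(real^'n \<Rightarrow> real) \<Rightarrow> real^'n \<Rightarrow> bool" where
  "upper_C2_at f x0 \<longleftrightarrow>
    (\<exists>W (T :: ((real^'n) \<times> (real^'n)) set) h dh d2h.
       open W \<and> x0 \<in> W \<and> compact T \<and> T \<noteq> {} \<and>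
       (\<forall>x\<in>W. (\<exists>t\<in>T. f x = h x t) \<and> (\<forall>t\<in>T. f x \<le> h x t)) \<and>
       (\<forall>x\<in>W. \<forall>t\<in>T. ((\<lambda>y. h y t) has_derivative (\<lambda>d. inner (dh x t) d)) (at x) \<and>
                       ((\<lambda>y. dh y t) has_derivative (\<lambda>d. d2h x t *v d)) (at x)) \<and>
       continuous_on (W \<times> T) (\<lambda>p. h (fst p) (snd p)) \<and>
       continuous_on (W \<times> T) (\<lambda>p. dh (fst p) (snd p)) \<and>
       continuous_on (W \<times> T) (\<lambda>p. (d2h (fst p) (snd p) :: real^'n^'n)))"

definition cluster_points :: "(nat \<Rightarrow> 'a::topological_space) \<Rightarrow> 'a set" where
  "cluster_points w = {p. \<exists>r. strict_mono r \<and> (w \<circ> r) \<longlonglongrightarrow> p}"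

definition nonpos_orthant :: "(real^'m) set" where
  "nonpos_orthant = {z. \<forall>i. z $ i \<le> 0}"

definition Gamma_set :: "(real^'n \<Rightarrow> real^'m) \<Rightarrow> (real^'n) set" where
  "Gamma_set g = {x. g x \<in> nonpos_orthant}"

definition Gfun :: "(real^'n \<Rightarrow> real^'m) \<Rightarrow> real^'n \<Rightarrow> real^'n \<Rightarrow> real^'m^'n \<Rightarrow> real^'m \<Rightarrow> real^'m" where
  "Gfun g x s V L = g s + transpose V *v (x - s) + (norm (x - s)^2 / 2) *\<^sub>R L"

definition Fmodel :: "(real^'n \<Rightarrow> real) \<Rightarrow> (real^'n \<Rightarrow> real) \<Rightarrow> real^'n \<Rightarrow> real^'n \<Rightarrow> real^'n^'n \<Rightarrow> real^'n \<Rightarrow> real" where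
  "Fmodel g0 \<phi> xk xi Q z = g0 xk + inner xi (z - xk) + inner (z - xk) (Q *v (z - xk)) / 2 + \<phi> z"

definition Uset :: "((real^'n) \<times> (real^'m) \<times> (real^'m^'n) \<times> (real^'n) \<times> (real^'n^'n)) set" where
  "Uset = {(s, L, V, xi, Q). (\<forall>i. 0 \<le> L $ i) \<and> transpose Q = Q \<and> (\<forall>d. 0 \<le> inner d (Q *v d))}"

definition Sset :: "(real^'n \<Rightarrow> real^'m) \<Rightarrow> (real^'n) \<times> (real^'m) \<times> (real^'m^'n) \<times> (real^'n) \<times> (real^'n^'n) \<Rightarrow> (real^'n) set" where
  "Sset g u = (case u of (s, L, V, xi, Q) \<Rightarrow> {x. Gfun g x s V L \<in> nonpos_orthant})"

definition Lambda_set :: "(real^'n \<Rightarrow> real^'m) \<Rightarrow> (real^'n) \<times> (real^'m) \<times> (real^'m^'n) \<times> (real^'n) \<times> (real^'n^'n)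
     \<Rightarrow> real^'n \<Rightarrow> real^'n \<Rightarrow> (real^'m) set" where
  "Lambda_set g u x y = (case u of (s, L, V, xi, Q) \<Rightarrow>
     {lam. lam \<in> limiting_normal_cone nonpos_orthant (Gfun g x s V L) \<and>
           V *v lam + (inner L lam) *\<^sub>R (x - s) = y})"

text \<open>M(u,x): KKT multipliers; grad_x theta(u,x) = xi + Q (x - s) since Q is self-adjoint.\<close>
definition Mset :: "(real^'n \<Rightarrow> real^'m) \<Rightarrow> (real^'n \<Rightarrow> real) \<Rightarrow> (real^'n) \<times> (real^'m) \<times> (real^'m^'n) \<times> (real^'n) \<times> (real^'n^'n)
     \<Rightarrow> real^'n \<Rightarrow> (real^'m) set" where
  "Mset g \<phi> u x = (case u of (s, L, V, xi, Q) \<Rightarrow>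
     {lam. lam \<in> limiting_normal_cone nonpos_orthant (Gfun g x s V L) \<and>
           (\<exists>w\<in>limiting_subdiff \<phi> x. xi + Q *v (x - s) + w + V *v lam + (inner L lam) *\<^sub>R (x - s) = 0)})"

definition partial_BMP :: "(real^'n \<Rightarrow> real^'m) \<Rightarrow> (real^'n) \<times> (real^'m) \<times> (real^'m^'n) \<times> (real^'n) \<times> (real^'n^'n)
     \<Rightarrow> real^'n \<Rightarrow> bool" where
  "partial_BMP g us xs \<longleftrightarrow> xs \<in> Sset g us \<and>
     (\<exists>\<kappa>>0. \<exists>\<delta>>0. \<forall>u x. u \<in> Uset \<and> dist (u, x) (us, xs) < \<delta> \<and> x \<in> Sset g u \<longrightarrow>
        (\<forall>y\<in>limiting_normal_cone (Sset g u) x. \<exists>lam\<in>Lambda_set g u x y. norm lam \<le> \<kappa> * norm y))"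

end

theory Submission
  imports Defs
begin

text \<open>On a compact set containing the iterates, the upper-\<open>C\<^sup>2\<close> functions \<open>g\<^sub>0\<close> and \<open>g\<^sub>i\<close>
  admit quadratic majorants with a common curvature constant and bounded subgradients. Hence
  the trial points stay uniformly close to the iterates, every trial with \<open>\<mu>\<close> or \<open>L\<close> above a
  fixed threshold passes the corresponding test, and the accepted parameters
  \<open>(\<mu>\<^sub>k, L\<^sup>k, Q\<^sub>k)\<close> stay bounded. The exact subproblem solution \<open>xbar k\<close> satisfies the convex
  optimality condition \<open>0 \<in> \<nabla>\<theta> + \<partial>\<phi>(xbar k) + N\<^bsub>S(u\<^sup>k)\<^esub>(xbar k)\<close> with a normal vector of
  bounded length. The data \<open>(u\<^sup>k, xbar k)\<close> range over a bounded set, so compactness turns the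
  bounded multiplier property at the cluster points into one constant \<open>\<kappa>\<close> for all large \<open>k\<close>,
  and \<open>\<kappa>\<close> converts that normal vector into a KKT multiplier of bounded norm.\<close>

section \<open>Quadratic majorants of upper-C2 functions\<close>

lemma second_order_upper_bound:
  fixes h :: "real^'n \<Rightarrow> real" and dh :: "real^'n \<Rightarrow> real^'n" and d2h :: "real^'n \<Rightarrow> real^'n^'n"
  assumes S: "convex S" "x \<in> S" "y \<in> S"
    and dh: "\<And>z. z \<in> S \<Longrightarrow> (h has_derivative (\<lambda>d. inner (dh z) d)) (at z)"
    and d2h: "\<And>z. z \<in> S \<Longrightarrow> (dh has_derivative (\<lambda>d. d2h z *v d)) (at z)"
    and C: "\<And>z. z \<in> S \<Longrightarrow> norm (d2h z) \<le> C"
  shows "h y \<le> h x + inner (dh x) (y - x) + real CARD('n) * real CARD('n) * C * norm (y - x)^2"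
proof -
  define Cn where "Cn = real CARD('n) * real CARD('n) * C"
  have "0 \<le> C" using C[OF S(2)] norm_ge_zero order_trans by blast
  then have Cn: "0 \<le> Cn" unfolding Cn_def by simp
  have dh_lipschitz: "norm (dh z - dh w) \<le> Cn * norm (z - w)" if "z \<in> S" "w \<in> S" for z w
  proof (rule differentiable_bound[OF S(1) _ _ that])
    fix u assume "u \<in> S"
    show "(dh has_derivative (*v) (d2h u)) (at u within S)"
      using d2h[OF \<open>u \<in> S\<close>] has_derivative_at_withinI by blast
    have "\<bar>d2h u $ i $ j\<bar> \<le> C" for i j
      using component_le_norm_cart[of "d2h u $ i" j] Finite_Cartesian_Product.norm_nth_le[of "d2h u" i] C[OF \<open>u \<in> S\<close>]
      by linarith
    then show "onorm ((*v) (d2h u)) \<le> Cn" unfolding Cn_def by (rule onorm_le_matrix_component)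
  qed
  have seg: "closed_segment x y \<subseteq> S" using S closed_segment_subset by blast
  define e where "e z = h z - inner (dh x) z" for z
  have "norm (e y - e x) \<le> Cn * norm (y - x) * norm (y - x)"
  proof (rule differentiable_bound[of "closed_segment x y" e "\<lambda>z d. inner (dh z - dh x) d"])
    fix z assume z: "z \<in> closed_segment x y"
    have "((\<lambda>z. h z - inner (dh x) z) has_derivative (\<lambda>d. inner (dh z) d - inner (dh x) d)) (at z)"
      using dh[of z] seg z by (auto intro!: derivative_eq_intros)
    then show "(e has_derivative (\<lambda>d. inner (dh z - dh x) d)) (at z within closed_segment x y)"
      unfolding e_def by (simp add: inner_diff_left has_derivative_at_withinI)
    have "norm (z - x) \<le> norm (y - x)"
      using z by (metis dist_commute dist_in_closed_segment dist_norm)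
    then have "norm (dh z - dh x) \<le> Cn * norm (y - x)"
      using dh_lipschitz[of z x] seg z S(2) Cn by (meson mult_left_mono order_trans subsetD)
    then show "onorm (\<lambda>d. inner (dh z - dh x) d) \<le> Cn * norm (y - x)"
      by (intro onorm_le) (metis Cauchy_Schwarz_ineq2 mult_right_mono norm_ge_zero order_trans real_norm_def)
  qed auto
  then have "e y - e x \<le> Cn * norm (y - x)^2" by (simp add: power2_eq_square mult.assoc)
  then show ?thesis unfolding e_def Cn_def by (simp add: inner_diff_right)
qed

lemma regular_subdiff_eq_of_quadratic_majorant:
  fixes f :: "'a::real_inner \<Rightarrow> real"
  assumes v: "v \<in> regular_subdiff f z" and r: "0 < r"
    and maj: "\<And>y. y \<in> ball z r \<Longrightarrow> f y \<le> f z + inner a (y - z) + \<rho> * norm (y - z)^2"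
  shows "v = a"
proof (rule ccontr)
  define b where "b = v - a"
  assume "v \<noteq> a"
  then have b: "0 < norm b" unfolding b_def by simp
  obtain d where d: "0 < d" and low: "\<And>y. dist y z < d \<Longrightarrow> f z + inner v (y - z) - norm b / 2 * norm (y - z) \<le> f y"
  proof -
    have "0 < norm b / 2" using b by simp
    then show thesis using v that unfolding regular_subdiff_def by blast
  qed
  define q where "q = norm b / (4 * (\<bar>\<rho>\<bar> + 1))"
  define t where "t = min d (min r q) / 2"
  have "0 < q" unfolding q_def using b by (simp add: abs_add_one_gt_zero)
  then have t: "0 < t" "t < d" "t < r" "t \<le> q"
    unfolding t_def using d r by (auto simp: min_def)
  define y where "y = z + (t / norm b) *\<^sub>R b"
  have ny: "norm (y - z) = t" unfolding y_def using t b by simp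
  have "dist y z < d" "y \<in> ball z r" using ny t by (auto simp: dist_norm norm_minus_commute)
  then have "inner b (y - z) \<le> norm b / 2 * t + \<rho> * t^2"
    using low[of y] maj[of y] unfolding b_def ny by (simp add: inner_diff_left)
  moreover have "inner b (y - z) = t * norm b"
    unfolding y_def using b by (simp add: power2_norm_eq_inner[symmetric] power2_eq_square)
  moreover have "\<rho> * t \<le> norm b / 4"
  proof -
    have "\<rho> * t \<le> (\<bar>\<rho>\<bar> + 1) * t" using t by (intro mult_right_mono) auto
    also have "\<dots> \<le> norm b / 4" using t(4) unfolding q_def by (simp add: field_simps abs_add_one_gt_zero)
    finally show ?thesis .
  qed
  moreover have "norm b / 2 * t = 1 / 2 * (t * norm b)" by simp
  moreover have "\<rho> * t^2 \<le> 1 / 4 * (t * norm b)"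
  proof -
    have "\<rho> * t^2 = (\<rho> * t) * t" by (simp add: power2_eq_square)
    also have "\<dots> \<le> norm b / 4 * t" using \<open>\<rho> * t \<le> norm b / 4\<close> t(1) by (intro mult_right_mono) auto
    finally show ?thesis by (simp add: mult.commute)
  qed
  ultimately have "t * norm b \<le> 3 / 4 * (t * norm b)" by linarith
  moreover have "0 < t * norm b" using t(1) b by simp
  ultimately show False by linarith
qed

lemma upper_C2_at_touching_majorants:
  fixes f :: "real^'n \<Rightarrow> real"
  assumes "upper_C2_at f x0"
  shows "\<exists>r>0. \<exists>\<rho> D. \<forall>z\<in>ball x0 r. \<exists>a. norm a \<le> D \<and>
           (\<forall>y\<in>cball x0 r. f y \<le> f z + inner a (y - z) + \<rho> * norm (y - z)^2)"
proof -
  obtain W and T :: "((real^'n) \<times> (real^'n)) set" and h dh d2h where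
    W: "open W" "x0 \<in> W" "compact T"
    and rep: "\<forall>x\<in>W. (\<exists>t\<in>T. f x = h x t) \<and> (\<forall>t\<in>T. f x \<le> h x t)"
    and der: "\<forall>x\<in>W. \<forall>t\<in>T. ((\<lambda>y. h y t) has_derivative (\<lambda>d. inner (dh x t) d)) (at x) \<and>
                       ((\<lambda>y. dh y t) has_derivative (\<lambda>d. d2h x t *v d)) (at x)"
    and cont_dh: "continuous_on (W \<times> T) (\<lambda>p. dh (fst p) (snd p))"
    and cont_d2h: "continuous_on (W \<times> T) (\<lambda>p. (d2h (fst p) (snd p) :: real^'n^'n))"
    using assms unfolding upper_C2_at_def by blast
  obtain r where r: "0 < r" "cball x0 r \<subseteq> W" using W open_contains_cball by blast
  have BT: "compact (cball x0 r \<times> T)" "cball x0 r \<times> T \<subseteq> W \<times> T" using W(3) r by (auto simp: compact_Times)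
  obtain D where D: "\<And>x t. x \<in> cball x0 r \<Longrightarrow> t \<in> T \<Longrightarrow> norm (dh x t) \<le> D"
    using compact_imp_bounded[OF compact_continuous_image[OF continuous_on_subset[OF cont_dh BT(2)] BT(1)]]
    unfolding bounded_iff by force
  obtain C where C: "\<And>x t. x \<in> cball x0 r \<Longrightarrow> t \<in> T \<Longrightarrow> norm (d2h x t) \<le> C"
    using compact_imp_bounded[OF compact_continuous_image[OF continuous_on_subset[OF cont_d2h BT(2)] BT(1)]]
    unfolding bounded_iff by force
  define \<rho> where "\<rho> = real CARD('n) * real CARD('n) * C"
  have "\<exists>a. norm a \<le> D \<and> (\<forall>y\<in>cball x0 r. f y \<le> f z + inner a (y - z) + \<rho> * norm (y - z)^2)"
    if z: "z \<in> ball x0 r" for z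
  proof -
    have "z \<in> W" using z r by auto
    then obtain t where t: "t \<in> T" "f z = h z t" using rep by blast
    have "f y \<le> f z + inner (dh z t) (y - z) + \<rho> * norm (y - z)^2" if y: "y \<in> cball x0 r" for y
    proof -
      have "f y \<le> h y t" using rep t(1) y r by blast
      also have "\<dots> \<le> h z t + inner (dh z t) (y - z) + \<rho> * norm (y - z)^2"
        unfolding \<rho>_def
        by (rule second_order_upper_bound[where S="cball x0 r" and d2h="\<lambda>z. d2h z t"])
          (use y z t(1) der C r in auto)
      finally show ?thesis using t(2) by simp
    qed
    then show ?thesis using D[of z t] z t(1) by auto
  qed
  then show ?thesis using r(1) by blast
qed


lemma limiting_subdiff_bound_of_regular:
  fixes f :: "'a::real_inner \<Rightarrow> real"
  assumes U: "open U" "x \<in> U" and v: "v \<in> limiting_subdiff f x"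
    and reg: "\<And>z w. z \<in> U \<Longrightarrow> w \<in> regular_subdiff f z \<Longrightarrow>
        norm w \<le> D \<and> (\<forall>y\<in>U. f y \<le> f z + inner w (y - z) + \<rho> * norm (y - z)^2)"
  shows "norm v \<le> D \<and> (\<forall>y\<in>U. f y \<le> f x + inner v (y - x) + \<rho> * norm (y - x)^2)"
proof -
  obtain xs vs where lim: "xs \<longlonglongrightarrow> x" "(\<lambda>k. f (xs k)) \<longlonglongrightarrow> f x"
      "\<And>k. vs k \<in> regular_subdiff f (xs k)" "vs \<longlonglongrightarrow> v"
    using v unfolding limiting_subdiff_def by blast
  have ev: "\<forall>\<^sub>F k in sequentially. xs k \<in> U" using lim(1) U by (rule topological_tendstoD)
  have "\<forall>\<^sub>F k in sequentially. norm (vs k) \<le> D"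
    using ev by eventually_elim (use reg lim(3) in blast)
  then have "norm v \<le> D" by (intro tendsto_upperbound[OF tendsto_norm[OF lim(4)]]) simp_all
  moreover have "f y \<le> f x + inner v (y - x) + \<rho> * norm (y - x)^2" if "y \<in> U" for y
  proof (rule tendsto_lowerbound)
    show "(\<lambda>k. f (xs k) + inner (vs k) (y - xs k) + \<rho> * norm (y - xs k)^2)
        \<longlonglongrightarrow> f x + inner v (y - x) + \<rho> * norm (y - x)^2"
      using lim by (intro tendsto_intros) auto
    show "\<forall>\<^sub>F k in sequentially. f y \<le> f (xs k) + inner (vs k) (y - xs k) + \<rho> * norm (y - xs k)^2"
      using ev by eventually_elim (use reg lim(3) that in blast)
  qed simp
  ultimately show ?thesis by blast
qed

lemma upper_C2_at_local_bound:
  fixes f :: "real^'n \<Rightarrow> real"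
  assumes "upper_C2_at f x0"
  shows "\<exists>r>0. \<exists>\<rho> D. \<forall>x\<in>ball x0 r. \<forall>v\<in>limiting_subdiff f x. norm v \<le> D \<and>
           (\<forall>y\<in>ball x0 r. f y \<le> f x + inner v (y - x) + \<rho> * norm (y - x)^2)"
proof -
  obtain r \<rho> D where r: "0 < r" and touch: "\<And>z. z \<in> ball x0 r \<Longrightarrow> \<exists>a. norm a \<le> D \<and>
      (\<forall>y\<in>cball x0 r. f y \<le> f z + inner a (y - z) + \<rho> * norm (y - z)^2)"
    using upper_C2_at_touching_majorants[OF assms] by blast
  have regular: "norm w \<le> D \<and> (\<forall>y\<in>ball x0 r. f y \<le> f z + inner w (y - z) + \<rho> * norm (y - z)^2)"
    if z: "z \<in> ball x0 r" and w: "w \<in> regular_subdiff f z" for z w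
  proof -
    obtain a where a: "norm a \<le> D"
      and maj: "\<forall>y\<in>cball x0 r. f y \<le> f z + inner a (y - z) + \<rho> * norm (y - z)^2"
      using touch[OF z] by blast
    have sub: "ball z (r - dist x0 z) \<subseteq> cball x0 r"
    proof
      fix y assume "y \<in> ball z (r - dist x0 z)"
      then show "y \<in> cball x0 r" using dist_triangle[of x0 y z] by (simp add: dist_commute)
    qed
    have "w = a"
      by (rule regular_subdiff_eq_of_quadratic_majorant[OF w, of "r - dist x0 z"]) (use z sub maj in auto)
    then show ?thesis using a maj by auto
  qed
  show ?thesis using limiting_subdiff_bound_of_regular[OF open_ball _ _ regular] r by blast
qed

lemma upper_C2_compact_local_bound:
  fixes f :: "real^'n \<Rightarrow> real"
  assumes K: "compact K" and uc: "\<forall>z\<in>K. upper_C2_at f z"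
  shows "\<exists>r>0. \<exists>\<rho> D. \<forall>x\<in>K. \<forall>v\<in>limiting_subdiff f x. norm v \<le> D \<and>
           (\<forall>y\<in>ball x r. f y \<le> f x + inner v (y - x) + \<rho> * norm (y - x)^2)"
proof -
  obtain R P Dz where RPD: "\<And>z. z \<in> K \<Longrightarrow> R z > 0 \<and> (\<forall>x\<in>ball z (R z). \<forall>v\<in>limiting_subdiff f x.
      norm v \<le> Dz z \<and> (\<forall>y\<in>ball z (R z). f y \<le> f x + inner v (y - x) + P z * norm (y - x)^2))"
    using upper_C2_at_local_bound uc by metis
  have cover: "K \<subseteq> (\<Union>z\<in>K. ball z (R z))" using RPD by force
  obtain F where F: "F \<subseteq> K" "finite F" "K \<subseteq> (\<Union>z\<in>F. ball z (R z))"
    by (rule compactE_image[OF K _ cover]) auto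
  obtain e where e: "e > 0" "\<And>x. x \<in> K \<Longrightarrow> \<exists>G\<in>(\<lambda>z. ball z (R z)) ` F. ball x e \<subseteq> G"
    by (rule Heine_Borel_lemma[OF K]) (use F in auto)
  define \<rho> where "\<rho> = (\<Sum>z\<in>F. \<bar>P z\<bar>)"
  define D where "D = (\<Sum>z\<in>F. \<bar>Dz z\<bar>)"
  show ?thesis
  proof (intro exI conjI ballI)
    fix x v assume x: "x \<in> K" and v: "v \<in> limiting_subdiff f x"
    obtain z where z: "z \<in> F" "ball x e \<subseteq> ball z (R z)" using e(2)[OF x] by blast
    have "x \<in> ball z (R z)" using z(2) e(1) centre_in_ball by blast
    then have bounds: "norm v \<le> Dz z" "\<forall>y\<in>ball z (R z). f y \<le> f x + inner v (y - x) + P z * norm (y - x)^2"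
      using RPD[of z] z(1) F(1) v by auto
    have "\<bar>P z\<bar> \<le> \<rho>" "\<bar>Dz z\<bar> \<le> D"
      unfolding \<rho>_def D_def using z(1) F(2) by (auto intro: member_le_sum)
    then show "norm v \<le> D" using bounds(1) by linarith
    fix y assume "y \<in> ball x e"
    then have "f y \<le> f x + inner v (y - x) + P z * norm (y - x)^2" using bounds(2) z(2) by blast
    also have "P z * norm (y - x)^2 \<le> \<rho> * norm (y - x)^2"
      using \<open>\<bar>P z\<bar> \<le> \<rho>\<close> by (intro mult_right_mono) auto
    finally show "f y \<le> f x + inner v (y - x) + \<rho> * norm (y - x)^2" by simp
  qed (rule e(1))
qed

text \<open>Far from \<open>x\<close> the quadratic term dominates the bounded quantities \<open>f y - f x\<close> and
  \<open>inner v (y - x)\<close>.\<close>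
lemma quadratic_majorant_extend:
  fixes f :: "'a::real_inner \<Rightarrow> real"
  assumes r: "0 < r" and loc: "\<forall>y\<in>ball x r. f y \<le> f x + inner v (y - x) + \<rho> * norm (y - x)^2"
    and v: "norm v \<le> D" and fx: "\<bar>f x\<bar> \<le> B" and fy: "\<bar>f y\<bar> \<le> B"
  shows "f y \<le> f x + inner v (y - x) + (\<bar>\<rho>\<bar> + 2 * B / r^2 + D / r) * norm (y - x)^2"
proof -
  define n where "n = norm (y - x)"
  have B: "0 \<le> B" using fx by linarith
  have D: "0 \<le> D" using v norm_ge_zero order_trans by blast
  have split: "(\<bar>\<rho>\<bar> + 2 * B / r^2 + D / r) * n^2 = \<bar>\<rho>\<bar> * n^2 + 2 * B / r^2 * n^2 + D / r * n^2"
    by (simp add: distrib_right)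
  show ?thesis
  proof (cases "n < r")
    case True
    then have "y \<in> ball x r" unfolding n_def by (simp add: dist_norm norm_minus_commute)
    then have "f y \<le> f x + inner v (y - x) + \<rho> * n^2" using loc unfolding n_def by blast
    moreover have "\<rho> * n^2 \<le> \<bar>\<rho>\<bar> * n^2" by (intro mult_right_mono) auto
    moreover have "0 \<le> 2 * B / r^2 * n^2 + D / r * n^2" using B D r by simp
    ultimately show ?thesis unfolding n_def[symmetric] split by linarith
  next
    case False
    then have "r^2 \<le> n^2" using r by (intro power_mono) auto
    then have "2 * B \<le> 2 * B / r^2 * n^2" using r B by (simp add: field_simps mult_left_mono)
    moreover have "D * n \<le> D / r * n^2"
    proof -
      have "D * n * r \<le> D * n * n" using False D by (intro mult_left_mono) (auto simp: n_def)
      then show ?thesis using r by (simp add: field_simps power2_eq_square)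
    qed
    moreover have "- inner v (y - x) \<le> D * n"
      using Cauchy_Schwarz_ineq2[of v "y - x"] mult_right_mono[OF v, of n] unfolding n_def by simp
    moreover have "0 \<le> \<bar>\<rho>\<bar> * n^2" by simp
    ultimately show ?thesis unfolding n_def[symmetric] split using fx fy by linarith
  qed
qed

lemma upper_C2_uniform_majorant:
  fixes f :: "real^'n \<Rightarrow> real"
  assumes K: "compact K" "\<forall>z\<in>K. upper_C2_at f z" and K2: "K \<subseteq> K2" "bounded (f ` K2)"
  shows "\<exists>\<rho> D. \<forall>x\<in>K. \<forall>v\<in>limiting_subdiff f x. norm v \<le> D \<and>
           (\<forall>y\<in>K2. f y \<le> f x + inner v (y - x) + \<rho> * norm (y - x)^2)"
proof -
  obtain r \<rho> D where r: "0 < r" and loc: "\<forall>x\<in>K. \<forall>v\<in>limiting_subdiff f x. norm v \<le> D \<and>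
      (\<forall>y\<in>ball x r. f y \<le> f x + inner v (y - x) + \<rho> * norm (y - x)^2)"
    using upper_C2_compact_local_bound[OF K] by blast
  obtain B where B: "\<And>z. z \<in> K2 \<Longrightarrow> \<bar>f z\<bar> \<le> B" using K2(2) unfolding bounded_iff by auto
  show ?thesis
  proof (rule exI[of _ "\<bar>\<rho>\<bar> + 2 * B / r^2 + D / r"], rule exI[of _ D], intro ballI conjI)
    fix x v assume "x \<in> K" "v \<in> limiting_subdiff f x"
    then show "norm v \<le> D" using loc by blast
    fix y assume "y \<in> K2"
    then show "f y \<le> f x + inner v (y - x) + (\<bar>\<rho>\<bar> + 2 * B / r^2 + D / r) * norm (y - x)^2"
      using quadratic_majorant_extend[OF r] loc B K2(1) \<open>x \<in> K\<close> \<open>v \<in> _\<close> by blast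
  qed
qed

section \<open>Convex functions\<close>

lemma convex_on_bounded_on_cball:
  fixes \<phi> :: "'a::euclidean_space \<Rightarrow> real"
  assumes "convex_on UNIV \<phi>"
  obtains B where "\<And>z. norm z \<le> T \<Longrightarrow> \<bar>\<phi> z\<bar> \<le> B"
proof -
  have cont: "continuous_on UNIV \<phi>" by (rule convex_on_continuous[OF open_UNIV assms])
  have "bounded (\<phi> ` cball 0 T)"
    by (intro compact_imp_bounded compact_continuous_image continuous_on_subset[OF cont]) auto
  then obtain B where B: "\<forall>z\<in>cball 0 T. \<bar>\<phi> z\<bar> \<le> B" unfolding bounded_iff by auto
  show ?thesis
    by (rule that[of B]) (use B in simp)
qed

lemma convex_on_lower_linear_bound:
  fixes \<phi> :: "'a::real_normed_vector \<Rightarrow> real"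
  assumes cv: "convex_on UNIV \<phi>" and M: "\<And>z. norm z \<le> R + 1 \<Longrightarrow> \<bar>\<phi> z\<bar> \<le> M"
    and x: "norm x \<le> R"
  shows "\<phi> x - \<phi> (x + d) \<le> 2 * M * norm d"
proof (cases "d = 0")
  case False
  then have nd: "0 < norm d" by simp
  define u where "u = d /\<^sub>R norm d"
  define p where "p = x - u"
  have "norm u = 1" unfolding u_def using nd by simp
  then have np: "norm p \<le> R + 1" unfolding p_def using x norm_triangle_ineq4[of x u] by linarith
  define th where "th = 1 / (1 + norm d)"
  have "0 < 1 + norm d" using nd by linarith
  then have th: "0 \<le> th" "th \<le> 1" "(1 + norm d) * th = 1" unfolding th_def by (auto simp: divide_le_eq_1)
  have "(1 - th) *\<^sub>R p + th *\<^sub>R (x + d) = x + (th * (1 + norm d) - 1) *\<^sub>R u"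
    unfolding p_def u_def using nd by (simp add: algebra_simps)
  then have "(1 - th) *\<^sub>R p + th *\<^sub>R (x + d) = x" using th(3) by (simp add: mult.commute)
  then have "\<phi> x \<le> (1 - th) * \<phi> p + th * \<phi> (x + d)"
    using convex_onD[OF cv th(1,2)] by (metis UNIV_I)
  then have "(1 + norm d) * \<phi> x \<le> (1 + norm d) * ((1 - th) * \<phi> p + th * \<phi> (x + d))"
    using nd by (intro mult_left_mono) auto
  also have "\<dots> = (1 + norm d) * \<phi> p - ((1 + norm d) * th) * \<phi> p + ((1 + norm d) * th) * \<phi> (x + d)"
    by (simp add: algebra_simps)
  also have "\<dots> = norm d * \<phi> p + \<phi> (x + d)" unfolding th(3) by (simp add: algebra_simps)
  finally have "\<phi> x - \<phi> (x + d) \<le> norm d * (\<phi> p - \<phi> x)" by (simp add: algebra_simps)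
  also have "\<dots> \<le> norm d * (2 * M)"
    using M[OF np] M[of x] x by (intro mult_left_mono) auto
  finally show ?thesis by (simp add: mult.commute)
qed simp

lemma quadratic_minorant_slope_bound:
  fixes \<phi> :: "'a::real_inner \<Rightarrow> real"
  assumes minor: "\<And>z. \<phi> x + inner w (z - x) - C * norm (z - x)^2 \<le> \<phi> z"
    and M: "\<And>z. norm z \<le> R + 1 \<Longrightarrow> \<bar>\<phi> z\<bar> \<le> M" and x: "norm x \<le> R" and C: "0 \<le> C"
  shows "norm w \<le> 2 * M + C"
proof (cases "w = 0")
  case True
  then show ?thesis using M[of x] x C by simp
next
  case False
  define z where "z = x + w /\<^sub>R norm w"
  have "norm (z - x) = 1" unfolding z_def using False by simp
  moreover have "norm z \<le> R + 1" unfolding z_def using x False norm_triangle_ineq[of x "w /\<^sub>R norm w"] by simp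
  moreover have "inner w (z - x) = norm w"
    unfolding z_def using False by (simp add: power2_norm_eq_inner[symmetric] power2_eq_square)
  ultimately show ?thesis using minor[of z] M[of z] M[of x] x by simp
qed

lemma convex_on_affine_inner:
  fixes a :: "'a::real_inner"
  shows "convex_on UNIV (\<lambda>z. c + inner a (z - s))"
  by (rule convex_onI) (simp_all add: inner_diff_right inner_add_right algebra_simps)

lemma convex_sublevel:
  assumes "convex_on UNIV f"
  shows "convex {z. f z \<le> c}"
  unfolding convex_alt
proof (intro ballI allI impI CollectI)
  fix x y and u :: real assume "x \<in> {z. f z \<le> c}" "y \<in> {z. f z \<le> c}" "0 \<le> u \<and> u \<le> 1"
  then show "f ((1 - u) *\<^sub>R x + u *\<^sub>R y) \<le> c"
    using convex_onD[OF assms, of u x y] convex_bound_le[of "f x" c "f y" "1 - u" u] by auto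
qed

lemma convex_strict_epigraph:
  assumes "convex_on UNIV f"
  shows "convex {p. f (fst p) < snd p}"
proof (rule convexI)
  fix p q :: "'a \<times> real" and u v :: real
  assume p: "p \<in> {p. f (fst p) < snd p}" and q: "q \<in> {p. f (fst p) < snd p}"
    and uv: "0 \<le> u" "0 \<le> v" "u + v = 1"
  have "f (u *\<^sub>R fst p + v *\<^sub>R fst q) \<le> u * f (fst p) + v * f (fst q)"
    using convex_onD[OF assms, of v "fst p" "fst q"] uv by (simp add: eq_diff_eq[symmetric])
  also have "\<dots> < u * snd p + v * snd q"
  proof (cases "u = 0")
    case False
    then have "u * f (fst p) < u * snd p" using p uv by simp
    moreover have "v * f (fst q) \<le> v * snd q" using q uv by (intro mult_left_mono) auto
    ultimately show ?thesis by linarith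
  qed (use uv q in simp)
  finally show "u *\<^sub>R p + v *\<^sub>R q \<in> {p. f (fst p) < snd p}" by simp
qed

text \<open>The separating hyperplane cannot be vertical: the strict epigraph lies over all of the
  space.\<close>
lemma convex_minimum_nonvertical_separation:
  fixes f :: "'a::euclidean_space \<Rightarrow> real"
  assumes cf: "convex_on UNIV f" and S: "convex S" "xb \<in> S" and min: "\<forall>z\<in>S. f xb \<le> f z"
  obtains a1 b and a2 :: real where "a2 < 0"
    "\<And>z r. f z < r \<Longrightarrow> inner a1 z + a2 * r \<le> b"
    "\<And>z r. z \<in> S \<Longrightarrow> r \<le> f xb \<Longrightarrow> b \<le> inner a1 z + a2 * r"
proof -
  define A where "A = {p :: 'a \<times> real. f (fst p) < snd p}"
  define B where "B = S \<times> {..f xb}"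
  have "(xb, f xb + 1) \<in> A" "(xb, f xb) \<in> B" unfolding A_def B_def using S(2) by auto
  moreover have "A \<inter> B = {}" unfolding A_def B_def using min by force
  ultimately obtain a b where ab: "a \<noteq> 0" "\<forall>p\<in>A. inner a p \<le> b" "\<forall>p\<in>B. b \<le> inner a p"
    using separating_hyperplane_sets[OF convex_strict_epigraph[OF cf] convex_Times[OF S(1)]]
    unfolding A_def B_def by blast
  obtain a1 a2 where a: "a = (a1, a2)" by (cases a)
  have above: "inner a1 z + a2 * r \<le> b" if "f z < r" for z r
    using ab(2) that unfolding A_def a by auto
  have below: "b \<le> inner a1 z + a2 * r" if "z \<in> S" "r \<le> f xb" for z r
    using ab(3) that unfolding B_def a by auto
  have "a2 \<le> 0" using above[of xb "f xb + 1"] below[OF S(2), of "f xb"] by (simp add: algebra_simps)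
  moreover have "a2 \<noteq> 0"
  proof
    assume a2: "a2 = 0"
    then have "a1 \<noteq> 0" using ab(1) a by (simp add: zero_prod_def)
    define t where "t = (\<bar>b\<bar> + 1) / inner a1 a1"
    have "t * inner a1 a1 = \<bar>b\<bar> + 1" unfolding t_def using \<open>a1 \<noteq> 0\<close> by simp
    moreover have "inner a1 (t *\<^sub>R a1) \<le> b" using above[of "t *\<^sub>R a1" "f (t *\<^sub>R a1) + 1"] a2 by simp
    ultimately show False by simp
  qed
  ultimately have "a2 < 0" by simp
  then show thesis using that above below by blast
qed

lemma convex_minimum_on_subgradient_normal:
  fixes f :: "'a::euclidean_space \<Rightarrow> real"
  assumes "convex_on UNIV f" "convex S" "xb \<in> S" "\<forall>z\<in>S. f xb \<le> f z"
  shows "\<exists>w. (\<forall>z. f xb + inner w (z - xb) \<le> f z) \<and> (\<forall>z\<in>S. 0 \<le> inner w (z - xb))"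
proof -
  obtain a1 b and a2 :: real where k: "0 < - a2"
    and above: "\<And>z r. f z < r \<Longrightarrow> inner a1 z + a2 * r \<le> b"
    and below: "\<And>z r. z \<in> S \<Longrightarrow> r \<le> f xb \<Longrightarrow> b \<le> inner a1 z + a2 * r"
    using convex_minimum_nonvertical_separation[OF assms] by (metis neg_0_less_iff_less)
  define w where "w = (1 / - a2) *\<^sub>R a1"
  define c where "c = b / - a2"
  have inner_w: "inner w z - c = (inner a1 z - b) / - a2" for z
    unfolding w_def c_def by (simp add: diff_divide_distrib)
  have w_le_f: "inner w z - c \<le> f z" for z
    unfolding inner_w
  proof (rule dense_ge)
    fix r assume "f z < r"
    then have "inner a1 z - b \<le> r * - a2" using above[of z r] by (simp add: algebra_simps)
    then show "(inner a1 z - b) / - a2 \<le> r" by (simp only: pos_divide_le_eq[OF k])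
  qed
  have f_le_w: "f xb \<le> inner w z - c" if "z \<in> S" for z
  proof -
    have "f xb * - a2 \<le> inner a1 z - b" using below[OF that order_refl] by (simp add: algebra_simps)
    then show ?thesis unfolding inner_w by (simp only: pos_le_divide_eq[OF k])
  qed
  show ?thesis
    using w_le_f f_le_w[OF assms(3)] w_le_f[of xb] f_le_w by (intro exI[of _ w]) (auto simp: inner_diff_right)
qed

section \<open>Quadratic forms\<close>

lemma inner_matrix_symmetric:
  fixes Q :: "real^'n^'n"
  assumes "transpose Q = Q"
  shows "inner a (Q *v b) = inner b (Q *v a)"
  by (metis assms dot_lmul_matrix inner_commute transpose_matrix_vector)

lemma quadratic_form_add:
  fixes Q :: "real^'n^'n"
  assumes "transpose Q = Q"
  shows "inner (a + e) (Q *v (a + e)) = inner a (Q *v a) + 2 * inner (Q *v a) e + inner e (Q *v e)"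
  using inner_matrix_symmetric[OF assms, of a e]
  by (simp add: matrix_vector_right_distrib inner_add_left inner_add_right inner_commute)

lemma convex_on_quadratic_form:
  fixes Q :: "real^'n^'n"
  assumes sym: "transpose Q = Q" and psd: "\<And>d. 0 \<le> inner d (Q *v d)"
  shows "convex_on UNIV (\<lambda>z. inner (z - s) (Q *v (z - s)))"
proof (rule convex_onI)
  fix t :: real and x y :: "real^'n" assume t: "0 < t" "t < 1"
  define a where "a = x - s"
  define e where "e = t *\<^sub>R (y - x)"
  define q where "q z = inner z (Q *v z)" for z
  have "(1 - t) *\<^sub>R x + t *\<^sub>R y - s = a + e" unfolding a_def e_def by (simp add: algebra_simps)
  moreover have "y - s = a + (1 / t) *\<^sub>R e" unfolding a_def e_def using t by simp
  moreover have "q (c *\<^sub>R e) = c^2 * q e" for c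
    unfolding q_def by (simp add: matrix_vector_mult_scaleR power2_eq_square)
  moreover have "0 \<le> (1 / t - 1) * q e" using t psd unfolding q_def by simp
  ultimately show "q ((1 - t) *\<^sub>R x + t *\<^sub>R y - s) \<le> (1 - t) * q (x - s) + t * q (y - s)"
    using t unfolding a_def[symmetric] q_def
    by (simp add: quadratic_form_add[OF sym] matrix_vector_mult_scaleR power2_eq_square field_simps)
qed simp

lemma convex_on_norm_power2:
  fixes s :: "real^'n"
  shows "convex_on UNIV (\<lambda>z. norm (z - s)^2)"
  using convex_on_quadratic_form[of "mat 1" s] by (simp add: transpose_mat power2_norm_eq_inner)

lemma symmetric_matrix_entry_bound:
  fixes Q :: "real^'n^'n"
  assumes sym: "transpose Q = Q"
    and bounds: "\<And>d. 0 \<le> inner d (Q *v d) \<and> inner d (Q *v d) \<le> c * norm d ^ 2"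
  shows "\<bar>Q $ a $ b\<bar> \<le> c"
proof -
  define ea :: "real^'n" where "ea = axis a 1"
  define eb :: "real^'n" where "eb = axis b 1"
  have entry: "inner ea (Q *v eb) = Q $ a $ b"
    unfolding ea_def eb_def by (simp add: matrix_vector_mult_basis inner_axis' column_def)
  have polar: "inner (ea + eb) (Q *v (ea + eb)) - inner (ea - eb) (Q *v (ea - eb)) = 4 * inner ea (Q *v eb)"
    using inner_matrix_symmetric[OF sym, of eb ea]
    by (simp add: matrix_vector_right_distrib matrix_vector_mult_diff_distrib inner_add_left
        inner_add_right inner_diff_left inner_diff_right)
  have "norm (ea + eb) \<le> 2" "norm (ea - eb) \<le> 2"
    using norm_triangle_ineq[of ea eb] norm_triangle_ineq4[of ea eb] unfolding ea_def eb_def by simp_all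
  then have "norm (ea + eb)^2 \<le> 4" "norm (ea - eb)^2 \<le> 4"
    by (metis norm_ge_zero power_mono numeral_Bit0 power2_eq_square mult_2 numeral_One)+
  moreover have "0 \<le> c" using bounds[of ea] unfolding ea_def by simp
  ultimately have "c * norm (ea + eb)^2 \<le> 4 * c" "c * norm (ea - eb)^2 \<le> 4 * c"
    by (simp_all add: mult_left_mono mult.commute)
  then have "\<bar>4 * inner ea (Q *v eb)\<bar> \<le> 4 * c"
    using bounds[of "ea + eb"] bounds[of "ea - eb"] polar by linarith
  then show ?thesis using entry by simp
qed

lemma norm_matrix_le_entry_bound:
  fixes A :: "real^'n^'m"
  assumes "\<And>a b. \<bar>A $ a $ b\<bar> \<le> c"
  shows "norm A \<le> real CARD('m) * (real CARD('n) * c)"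
proof -
  have "norm A \<le> (\<Sum>a\<in>UNIV. norm (A $ a))" by (simp add: norm_vec_def L2_set_le_sum)
  also have "\<dots> \<le> (\<Sum>a\<in>(UNIV::'m set). real CARD('n) * c)"
  proof (rule sum_mono)
    fix a
    have "norm (A $ a) \<le> (\<Sum>b\<in>UNIV. \<bar>A $ a $ b\<bar>)" by (rule norm_le_l1_cart)
    also have "\<dots> \<le> (\<Sum>b\<in>(UNIV::'n set). c)" using assms by (intro sum_mono)
    finally show "norm (A $ a) \<le> real CARD('n) * c" by simp
  qed
  finally show ?thesis by simp
qed

lemma norm_matrix_vector_le_entry_bound:
  fixes A :: "real^'n^'m"
  assumes "\<And>a b. \<bar>A $ a $ b\<bar> \<le> c"
  shows "norm (A *v x) \<le> real CARD('m) * real CARD('n) * c * norm x"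
proof -
  have "onorm ((*v) A) \<le> real CARD('m) * real CARD('n) * c"
    by (rule onorm_le_matrix_component) (use assms in auto)
  then show ?thesis
    using onorm[OF matrix_vector_mul_bounded_linear, of A x] by (meson mult_right_mono norm_ge_zero order_trans)
qed

section \<open>Subgradients and normal vectors\<close>

lemma regular_subdiffI_quadratic_minorant:
  fixes \<phi> :: "'a::real_inner \<Rightarrow> real"
  assumes minor: "\<And>z. \<phi> x + inner v (z - x) - C * norm (z - x)^2 \<le> \<phi> z" and C: "0 \<le> C"
  shows "v \<in> regular_subdiff \<phi> x"
  unfolding regular_subdiff_def mem_Collect_eq
proof (intro allI impI)
  fix e :: real assume e: "0 < e"
  show "\<exists>d>0. \<forall>z. dist z x < d \<longrightarrow> \<phi> x + inner v (z - x) - e * norm (z - x) \<le> \<phi> z"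
  proof (intro exI conjI allI impI)
    show "0 < e / (C + 1)" using e C by simp
    fix z assume "dist z x < e / (C + 1)"
    then have "(C + 1) * norm (z - x) \<le> e" using C by (simp add: dist_norm field_simps)
    moreover have "C * norm (z - x) \<le> (C + 1) * norm (z - x)" by (simp add: distrib_right)
    ultimately have "C * norm (z - x) \<le> e" by linarith
    then have "C * norm (z - x)^2 \<le> e * norm (z - x)"
      by (simp add: power2_eq_square mult.assoc[symmetric] mult_right_mono)
    then show "\<phi> x + inner v (z - x) - e * norm (z - x) \<le> \<phi> z" using minor[of z] by linarith
  qed
qed

lemma regular_subdiff_subset_limiting: "regular_subdiff f x \<subseteq> limiting_subdiff f x"
proof
  fix v assume "v \<in> regular_subdiff f x"
  then show "v \<in> limiting_subdiff f x"
    unfolding limiting_subdiff_def by (intro CollectI exI[of _ "\<lambda>k. x"] exI[of _ "\<lambda>k. v"]) auto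
qed

lemma limiting_normal_coneI_supporting:
  assumes "x \<in> S" and "\<And>z. z \<in> S \<Longrightarrow> inner y (z - x) \<le> 0"
  shows "y \<in> limiting_normal_cone S x"
proof -
  have reg: "y \<in> regular_normal_cone S x"
    unfolding regular_normal_cone_def using assms
    by (auto intro!: exI[of _ 1] order_trans[OF _ mult_nonneg_nonneg])
  show ?thesis
    unfolding limiting_normal_cone_def if_P[OF assms(1)]
    by (rule CollectI, rule exI[of _ "\<lambda>k. x"], rule exI[of _ "\<lambda>k. y"]) (use assms(1) reg in auto)
qed

section \<open>The subproblem\<close>

lemma Gfun_component:
  "Gfun g z s V L $ i = g s $ i + inner (column i V) (z - s) + norm (z - s)^2 / 2 * L $ i"
  by (simp add: Gfun_def vector_matrix_mult_def column_def inner_vec_def mult.commute)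

lemma convex_Gfun_feasible_set:
  assumes "\<And>i. 0 \<le> L $ i"
  shows "convex {z. Gfun g z s V L \<in> nonpos_orthant}"
proof -
  have "convex_on UNIV (\<lambda>z. (g s $ i + inner (column i V) (z - s)) + L $ i / 2 * norm (z - s)^2)" for i
    using assms[of i] by (intro convex_on_add convex_on_affine_inner convex_on_cmul convex_on_norm_power2) simp
  then have "convex_on UNIV (\<lambda>z. Gfun g z s V L $ i)" for i
    unfolding Gfun_component by (simp add: algebra_simps)
  then have "convex (\<Inter>i. {z. Gfun g z s V L $ i \<le> 0})" by (intro convex_INT convex_sublevel)
  moreover have "{z. Gfun g z s V L \<in> nonpos_orthant} = (\<Inter>i. {z. Gfun g z s V L $ i \<le> 0})"
    unfolding nonpos_orthant_def by auto
  ultimately show ?thesis by simp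
qed

lemma component_le_of_violation_bound:
  fixes G l :: "real^'m"
  assumes "max (- inner l G) 0 + Max (range (\<lambda>i. max (G $ i) 0)) \<le> b"
  shows "G $ i \<le> b"
proof -
  have "G $ i \<le> Max (range (\<lambda>i. max (G $ i) 0))"
    by (rule order_trans[OF max.cobounded1 Max_ge]) auto
  then show ?thesis using assms by linarith
qed

lemma convex_on_Fmodel:
  fixes Q :: "real^'n^'n"
  assumes "transpose Q = Q" "\<And>d. 0 \<le> inner d (Q *v d)" "convex_on UNIV \<phi>"
  shows "convex_on UNIV (Fmodel g0 \<phi> s \<xi> Q)"
  unfolding Fmodel_def
  by (intro convex_on_add convex_on_affine_inner convex_on_cdiv convex_on_quadratic_form assms) simp

lemma Fmodel_diff:
  fixes Q :: "real^'n^'n"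
  assumes "transpose Q = Q"
  shows "Fmodel g0 \<phi> s \<xi> Q z - Fmodel g0 \<phi> s \<xi> Q xb =
     inner (\<xi> + Q *v (xb - s)) (z - xb) + inner (z - xb) (Q *v (z - xb)) / 2 + \<phi> z - \<phi> xb"
proof -
  have "z - s = (xb - s) + (z - xb)" by simp
  then have "inner (z - s) (Q *v (z - s)) = inner (xb - s) (Q *v (xb - s))
      + 2 * inner (Q *v (xb - s)) (z - xb) + inner (z - xb) (Q *v (z - xb))"
    by (metis quadratic_form_add[OF assms])
  moreover have "inner \<xi> (z - s) = inner \<xi> (xb - s) + inner \<xi> (z - xb)" by (simp add: inner_diff_right)
  ultimately show ?thesis unfolding Fmodel_def by (simp add: inner_add_left field_simps)
qed

lemma Fmodel_descent_dist:
  fixes Q :: "real^'n^'n"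
  assumes descent: "Fmodel g0 \<phi> s \<xi> Q z \<le> Fmodel g0 \<phi> s \<xi> Q s"
    and Q: "\<mu> * norm (z - s)^2 \<le> inner (z - s) (Q *v (z - s))" and \<mu>: "0 < \<mu>"
    and \<xi>: "norm \<xi> \<le> \<Xi>" and \<phi>: "\<phi> s - \<phi> z \<le> Lp * norm (z - s)" and Lp: "0 \<le> Lp"
  shows "norm (z - s) \<le> 2 * (\<Xi> + Lp) / \<mu>"
proof -
  define n where "n = norm (z - s)"
  have "- inner \<xi> (z - s) \<le> \<Xi> * n"
    using Cauchy_Schwarz_ineq2[of \<xi> "z - s"] mult_right_mono[OF \<xi>, of n] unfolding n_def by simp
  with descent Q \<phi> have "\<mu> * n^2 / 2 \<le> (\<Xi> + Lp) * n"
    unfolding Fmodel_def n_def by (simp add: distrib_right)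
  then have key: "(\<mu> * n / 2) * n \<le> (\<Xi> + Lp) * n" by (simp add: power2_eq_square algebra_simps)
  have "0 \<le> \<Xi>" using \<xi> norm_ge_zero order_trans by blast
  show ?thesis
  proof (cases "n = 0")
    case False
    then have "0 < n" unfolding n_def by simp
    then have "\<mu> * n / 2 \<le> \<Xi> + Lp" using key by (simp only: mult_le_cancel_right_pos)
    then show ?thesis unfolding n_def[symmetric] using \<mu> by (simp add: field_simps)
  qed (use \<open>0 \<le> \<Xi>\<close> Lp \<mu> n_def in simp)
qed

lemma Fmodel_minimum_KKT:
  fixes Q :: "real^'n^'n"
  assumes sym: "transpose Q = Q" and psd: "\<And>d. 0 \<le> inner d (Q *v d)"
    and upper: "\<And>d. inner d (Q *v d) \<le> c * norm d^2" and c: "0 \<le> c"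
    and \<phi>: "convex_on UNIV \<phi>" and S: "convex S" "xb \<in> S"
    and min: "\<forall>z\<in>S. Fmodel g0 \<phi> s \<xi> Q xb \<le> Fmodel g0 \<phi> s \<xi> Q z"
  shows "\<exists>w y. w \<in> limiting_subdiff \<phi> xb \<and>
           (\<forall>z. \<phi> xb + inner w (z - xb) - c / 2 * norm (z - xb)^2 \<le> \<phi> z) \<and>
           y \<in> limiting_normal_cone S xb \<and> \<xi> + Q *v (xb - s) + w + y = 0"
proof -
  obtain u where u_sub: "\<And>z. Fmodel g0 \<phi> s \<xi> Q xb + inner u (z - xb) \<le> Fmodel g0 \<phi> s \<xi> Q z"
    and u_normal: "\<And>z. z \<in> S \<Longrightarrow> 0 \<le> inner u (z - xb)"
    using convex_minimum_on_subgradient_normal[OF convex_on_Fmodel[OF sym psd \<phi>] S min] by blast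
  define w where "w = u - (\<xi> + Q *v (xb - s))"
  have minor: "\<phi> xb + inner w (z - xb) - c / 2 * norm (z - xb)^2 \<le> \<phi> z" for z
    using u_sub[of z] Fmodel_diff[OF sym, of g0 \<phi> s \<xi> z xb] upper[of "z - xb"]
      times_divide_eq_left[of c 2 "norm (z - xb)^2"]
    unfolding w_def inner_diff_left by (simp add: field_simps)
  have "w \<in> limiting_subdiff \<phi> xb"
    using regular_subdiffI_quadratic_minorant[OF minor] c regular_subdiff_subset_limiting by force
  moreover have "- u \<in> limiting_normal_cone S xb"
    using u_normal by (intro limiting_normal_coneI_supporting[OF S(2)]) simp
  moreover have "\<xi> + Q *v (xb - s) + w + - u = 0" unfolding w_def by simp
  ultimately show ?thesis using minor by blast
qed

section \<open>Bounded multipliers\<close>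

definition bounded_multipliers ::
  "(real^'n \<Rightarrow> real^'m) \<Rightarrow> real \<Rightarrow> (real^'n) \<times> (real^'m) \<times> (real^'m^'n) \<times> (real^'n) \<times> (real^'n^'n)
     \<Rightarrow> real^'n \<Rightarrow> bool" where
  "bounded_multipliers g \<kappa> u x \<longleftrightarrow>
     (\<forall>y\<in>limiting_normal_cone (Sset g u) x. \<exists>l\<in>Lambda_set g u x y. norm l \<le> \<kappa> * norm y)"

lemma bounded_multipliers_mono:
  assumes "bounded_multipliers g \<kappa> u x" "\<kappa> \<le> \<kappa>'"
  shows "bounded_multipliers g \<kappa>' u x"
  unfolding bounded_multipliers_def
proof
  fix y assume "y \<in> limiting_normal_cone (Sset g u) x"
  then obtain l where "l \<in> Lambda_set g u x y" "norm l \<le> \<kappa> * norm y"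
    using assms(1) unfolding bounded_multipliers_def by blast
  moreover have "\<kappa> * norm y \<le> \<kappa>' * norm y" using assms(2) by (simp add: mult_right_mono)
  ultimately show "\<exists>l\<in>Lambda_set g u x y. norm l \<le> \<kappa>' * norm y" by force
qed

lemma partial_BMP_near:
  assumes "partial_BMP g us xs"
  obtains \<kappa> \<delta> where "0 < \<delta>"
    "\<And>u x. u \<in> Uset \<Longrightarrow> x \<in> Sset g u \<Longrightarrow> dist (u, x) (us, xs) < \<delta> \<Longrightarrow> bounded_multipliers g \<kappa> u x"
  using assms unfolding partial_BMP_def bounded_multipliers_def by blast

lemma strict_mono_choice:
  assumes "\<And>n N. \<exists>k\<ge>N. P n k"
  obtains r :: "nat \<Rightarrow> nat" where "strict_mono r" "\<And>n. P n (r n)"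
proof -
  have "\<forall>n. \<forall>N. \<exists>k. N \<le> k \<and> P n k" using assms by blast
  then obtain f where f: "\<And>n N. N \<le> f n N \<and> P n (f n N)" unfolding choice_iff by blast
  define r where "r = rec_nat (f 0 0) (\<lambda>n rn. f (Suc n) (Suc rn))"
  have r_Suc: "r (Suc n) = f (Suc n) (Suc (r n))" for n unfolding r_def by simp
  have "strict_mono r"
    unfolding strict_mono_Suc_iff using f r_Suc by (metis Suc_le_eq)
  moreover have "P n (r n)" for n
    by (cases n) (use f r_Suc in \<open>simp_all add: r_def\<close>)
  ultimately show ?thesis by (rule that)
qed

text \<open>Compactness turns the local constants of the bounded multiplier property at the
  cluster points into a single constant along the tail of the sequence.\<close>
lemma eventually_bounded_multipliers:
  fixes P :: "nat \<Rightarrow> ((real^'n) \<times> (real^'m) \<times> (real^'m^'n) \<times> (real^'n) \<times> (real^'n^'n)) \<times> (real^'n)"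
  assumes bounded: "bounded (range P)"
    and BMP: "\<forall>p\<in>cluster_points P. partial_BMP g (fst p) (snd p)"
    and feasible: "\<And>k. fst (P k) \<in> Uset \<and> snd (P k) \<in> Sset g (fst (P k))"
  shows "\<exists>\<kappa>. \<forall>\<^sub>F k in sequentially. bounded_multipliers g \<kappa> (fst (P k)) (snd (P k))"
proof (rule ccontr)
  assume "\<not> ?thesis"
  then have "\<exists>k\<ge>N. \<not> bounded_multipliers g (real n) (fst (P k)) (snd (P k))" for n N
    unfolding eventually_sequentially by (auto simp: not_le)
  then obtain r where r: "strict_mono r" "\<And>n. \<not> bounded_multipliers g (real n) (fst (P (r n))) (snd (P (r n)))"
    using strict_mono_choice[of "\<lambda>n k. \<not> bounded_multipliers g (real n) (fst (P k)) (snd (P k))"]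
    by blast
  have "bounded (range (P \<circ> r))" using bounded by (rule bounded_subset) auto
  then obtain p s where s: "strict_mono s" "(P \<circ> r \<circ> s) \<longlonglongrightarrow> p"
    using bounded_imp_convergent_subsequence by (metis comp_assoc)
  then have "p \<in> cluster_points P"
    unfolding cluster_points_def using r(1) by (auto intro!: exI[of _ "r \<circ> s"] strict_mono_o simp: o_assoc)
  then obtain \<kappa> \<delta> where \<delta>: "0 < \<delta>" and near: "\<And>u x. u \<in> Uset \<Longrightarrow> x \<in> Sset g u \<Longrightarrow>
      dist (u, x) (fst p, snd p) < \<delta> \<Longrightarrow> bounded_multipliers g \<kappa> u x"
    using BMP partial_BMP_near by metis
  obtain N where N: "\<And>i. N \<le> i \<Longrightarrow> dist (P (r (s i))) p < \<delta>"
    using s(2) \<delta> unfolding lim_sequentially by auto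
  define i where "i = max N (nat \<lceil>\<kappa>\<rceil>)"
  have "\<kappa> \<le> real (s i)"
    using seq_suble[OF s(1), of i] real_nat_ceiling_ge[of \<kappa>] unfolding i_def by linarith
  moreover have "bounded_multipliers g \<kappa> (fst (P (r (s i)))) (snd (P (r (s i))))"
    using near feasible N[of i] unfolding i_def by simp
  ultimately show False using r(2) bounded_multipliers_mono by blast
qed

lemma Mset_element_of_bounded_multipliers:
  assumes BM: "bounded_multipliers g \<kappa> (s, L, V, \<xi>, Q) x"
    and w: "w \<in> limiting_subdiff \<phi> x"
    and y: "y \<in> limiting_normal_cone (Sset g (s, L, V, \<xi>, Q)) x"
    and stat: "\<xi> + Q *v (x - s) + w + y = 0"
  shows "\<exists>l\<in>Mset g \<phi> (s, L, V, \<xi>, Q) x. norm l \<le> \<kappa> * norm y"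
proof -
  obtain l where l: "l \<in> Lambda_set g (s, L, V, \<xi>, Q) x y" "norm l \<le> \<kappa> * norm y"
    using BM y unfolding bounded_multipliers_def by blast
  then have "l \<in> Mset g \<phi> (s, L, V, \<xi>, Q) x"
    using w stat unfolding Lambda_set_def Mset_def by (auto simp: add.assoc)
  then show ?thesis using l(2) by blast
qed

section \<open>The backtracking loop\<close>

lemma line_search_mu_mono:
  fixes \<mu> :: "nat \<Rightarrow> real"
  assumes \<tau>: "1 < \<tau>" and \<mu>0: "0 < \<mu> 0"
    and step: "\<forall>j<J. \<not> (P j \<and> P' j) \<and> (if \<not> P j then L (Suc j) = \<tau> *\<^sub>R L j \<and> \<mu> (Suc j) = \<mu> j
                                     else L (Suc j) = L j \<and> \<mu> (Suc j) = \<tau> * \<mu> j)"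
  shows "j \<le> J \<Longrightarrow> \<mu> 0 \<le> \<mu> j"
proof (induction j)
  case (Suc j)
  then have IH: "\<mu> 0 \<le> \<mu> j" and "j < J" by simp_all
  then have "\<mu> (Suc j) = \<mu> j \<or> \<mu> (Suc j) = \<tau> * \<mu> j" using step by (cases "P j") auto
  moreover have "\<mu> j \<le> \<tau> * \<mu> j" using IH \<mu>0 \<tau> by simp
  ultimately show ?case using IH by auto
qed simp

lemma line_search_bounded:
  fixes \<mu> :: "nat \<Rightarrow> real" and L :: "nat \<Rightarrow> real^'m"
  assumes \<tau>: "1 < \<tau>" and Lmin: "0 < Lmin" "\<And>i. Lmin \<le> L 0 $ i"
    and step: "\<forall>j<J. \<not> (P j \<and> P' j) \<and> (if \<not> P j then L (Suc j) = \<tau> *\<^sub>R L j \<and> \<mu> (Suc j) = \<mu> j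
                                     else L (Suc j) = L j \<and> \<mu> (Suc j) = \<tau> * \<mu> j)"
    and large_\<mu>: "\<And>j. j \<le> J \<Longrightarrow> P j \<Longrightarrow> \<mu>s \<le> \<mu> j \<Longrightarrow> P' j"
    and large_L: "\<And>j. j \<le> J \<Longrightarrow> \<forall>i. Ls \<le> L j $ i \<Longrightarrow> P j"
  shows "j \<le> J \<Longrightarrow> \<mu> j \<le> max (\<mu> 0) (\<tau> * \<mu>s) \<and>
           (\<exists>c. 1 \<le> c \<and> c \<le> max 1 (\<tau> * Ls / Lmin) \<and> L j = c *\<^sub>R L 0)"
proof (induction j)
  case 0
  show ?case by (auto intro!: exI[of _ 1])
next
  case (Suc j)
  then have j: "j < J" "j \<le> J" by auto
  then have \<mu>j: "\<mu> j \<le> max (\<mu> 0) (\<tau> * \<mu>s)" and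
    c: "\<exists>c. 1 \<le> c \<and> c \<le> max 1 (\<tau> * Ls / Lmin) \<and> L j = c *\<^sub>R L 0"
    using Suc.IH by auto
  obtain c where c: "1 \<le> c" "c \<le> max 1 (\<tau> * Ls / Lmin)" "L j = c *\<^sub>R L 0" using c by blast
  show ?case
  proof (cases "P j")
    case False
    then have upd: "L (Suc j) = (\<tau> * c) *\<^sub>R L 0" "\<mu> (Suc j) = \<mu> j" using step j(1) c(3) by auto
    have "\<not> (\<forall>i. Ls \<le> L j $ i)" using large_L[OF j(2)] False by blast
    then obtain i where "L j $ i < Ls" by (auto simp: not_le)
    moreover have "c * Lmin \<le> L j $ i" using Lmin(2)[of i] c by simp
    ultimately have "c < Ls / Lmin" using Lmin(1) by (simp add: field_simps)
    then have "\<tau> * c \<le> \<tau> * (Ls / Lmin)" using \<tau> by (intro mult_left_mono) auto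
    moreover have "1 * 1 \<le> \<tau> * c" using \<tau> c(1) by (intro mult_mono) auto
    ultimately show ?thesis using upd \<mu>j by (auto intro!: exI[of _ "\<tau> * c"])
  next
    case True
    then have upd: "L (Suc j) = L j" "\<mu> (Suc j) = \<tau> * \<mu> j" "\<not> P' j" using step j(1) by auto
    then have "\<mu> j < \<mu>s" using large_\<mu>[OF j(2) True] by (meson not_le)
    then have "\<tau> * \<mu> j \<le> \<tau> * \<mu>s" using \<tau> by simp
    then show ?thesis using upd c by auto
  qed
qed

section \<open>Runs of the algorithm\<close>

lemma loc_lipschitz_on_imp_continuous_on:
  assumes "loc_lipschitz_on S f"
  shows "continuous_on S f"
proof (rule continuous_at_imp_continuous_on, rule ballI)
  fix x assume "x \<in> S"
  then obtain e K where "0 < e" "K-lipschitz_on (ball x e) f"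
    using assms unfolding loc_lipschitz_on_def by blast
  then have "continuous_on (ball x e) f" by (simp add: lipschitz_on_continuous_on)
  then show "isCont f x" using continuous_on_eq_continuous_at[OF open_ball, of x e f] \<open>0 < e\<close> by simp
qed

text \<open>Local Lipschitz continuity of \<open>g\<^sub>0\<close> and \<open>g\<^sub>i\<close> enters only as continuity.\<close>

locale iMBA_run =
  fixes g0 :: "real^'n \<Rightarrow> real" and g :: "real^'n \<Rightarrow> real^'m" and \<phi> :: "real^'n \<Rightarrow> real"
    and Oset :: "(real^'n) set"
    and \<mu>min \<mu>max Lmin Lmax M \<beta>C \<alpha> \<tau> :: real
    and x \<xi> :: "nat \<Rightarrow> real^'n" and V :: "nat \<Rightarrow> real^'m^'n" and jk :: "nat \<Rightarrow> nat"
    and \<mu> :: "nat \<Rightarrow> nat \<Rightarrow> real" and L :: "nat \<Rightarrow> nat \<Rightarrow> real^'m"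
    and Q :: "nat \<Rightarrow> nat \<Rightarrow> real^'n^'n"
    and y xb :: "nat \<Rightarrow> nat \<Rightarrow> real^'n" and lam :: "nat \<Rightarrow> nat \<Rightarrow> real^'m"
  assumes Gamma_subset: "Gamma_set g \<subseteq> Oset"
    and g0_cont: "continuous_on Oset g0"
    and g0_upper_C2: "\<forall>z\<in>Oset. upper_C2_at g0 z"
    and g_cont: "\<And>i. continuous_on UNIV (\<lambda>z. g z $ i)"
    and g_upper_C2: "\<And>i z. upper_C2_at (\<lambda>z. g z $ i) z"
    and \<phi>_convex: "convex_on UNIV \<phi>"
    and \<mu>min: "0 < \<mu>min" and Lmin: "0 < Lmin" and M: "0 < M" and \<tau>: "1 < \<tau>"
    and x0: "x 0 \<in> Gamma_set g"
    and \<xi>_sub: "\<And>k. \<xi> k \<in> limiting_subdiff g0 (x k)"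
    and V_sub: "\<And>k i. column i (V k) \<in> limiting_subdiff (\<lambda>z. g z $ i) (x k)"
    and \<mu>0: "\<And>k. \<mu>min \<le> \<mu> k 0 \<and> \<mu> k 0 \<le> \<mu>max"
    and L0: "\<And>k i. Lmin \<le> L k 0 $ i \<and> L k 0 $ i \<le> Lmax"
    and Q_sym: "\<And>k j. j \<le> jk k \<Longrightarrow> transpose (Q k j) = Q k j"
    and Q_bounds: "\<And>k j d. j \<le> jk k \<Longrightarrow>
        \<mu> k j * norm d ^ 2 \<le> inner d (Q k j *v d) \<and> inner d (Q k j *v d) \<le> (\<mu> k j + M) * norm d ^ 2"
    and xb_feasible: "\<And>k j. j \<le> jk k \<Longrightarrow> Gfun g (xb k j) (x k) (V k) (L k j) \<in> nonpos_orthant"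
    and xb_min: "\<And>k j z. j \<le> jk k \<Longrightarrow> Gfun g z (x k) (V k) (L k j) \<in> nonpos_orthant \<Longrightarrow>
        Fmodel g0 \<phi> (x k) (\<xi> k) (Q k j) (xb k j) \<le> Fmodel g0 \<phi> (x k) (\<xi> k) (Q k j) z"
    and descent: "\<And>k j. j \<le> jk k \<Longrightarrow>
        Fmodel g0 \<phi> (x k) (\<xi> k) (Q k j) (y k j) \<le> Fmodel g0 \<phi> (x k) (\<xi> k) (Q k j) (x k)"
    and violation: "\<And>k j. j \<le> jk k \<Longrightarrow>
        max (- inner (lam k j) (Gfun g (y k j) (x k) (V k) (L k j))) 0
        + Max (range (\<lambda>i. max (Gfun g (y k j) (x k) (V k) (L k j) $ i) 0))
        \<le> \<beta>C / 2 * norm (y k j - x k) ^ 2"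
    and accept: "\<And>k. g (y k (jk k)) \<in> nonpos_orthant"
    and reject: "\<And>k. \<forall>j<jk k.
        \<not> (g (y k j) \<in> nonpos_orthant \<and>
           g0 (y k j) + \<phi> (y k j) \<le> g0 (x k) + \<phi> (x k) - \<alpha> / 2 * norm (y k j - x k) ^ 2) \<and>
        (if g (y k j) \<notin> nonpos_orthant
         then L k (Suc j) = \<tau> *\<^sub>R L k j \<and> \<mu> k (Suc j) = \<mu> k j
         else L k (Suc j) = L k j \<and> \<mu> k (Suc j) = \<tau> * \<mu> k j)"
    and update: "\<And>k. x (Suc k) = y k (jk k)"
    and x_bounded: "bounded (range x)"
    and BMP: "\<forall>p\<in>cluster_points (\<lambda>k. ((x k, L k (jk k), V k, \<xi> k, Q k (jk k)), xb k (jk k))).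
        partial_BMP g (fst p) (snd p)"
begin

abbreviation "data k \<equiv> (x k, L k (jk k), V k, \<xi> k, Q k (jk k))"

abbreviation "xbar k \<equiv> xb k (jk k)"

lemma iterate_feasible: "x k \<in> Gamma_set g"
  by (induction k) (use x0 accept update in \<open>auto simp: Gamma_set_def\<close>)

lemma closed_Gamma_set: "closed (Gamma_set g)"
proof -
  have "Gamma_set g = {z. \<forall>i. g z $ i \<le> 0}" unfolding Gamma_set_def nonpos_orthant_def by simp
  also have "closed \<dots>" by (intro closed_Collect_all closed_Collect_le g_cont continuous_on_const)
  finally show ?thesis .
qed

lemma iterates_bounded: obtains R where "0 \<le> R" "\<And>k. norm (x k) \<le> R"
  using x_bounded unfolding bounded_iff by (meson norm_ge_zero order_trans rangeI)

lemma \<mu>_ge_\<mu>min: "j \<le> jk k \<Longrightarrow> \<mu>min \<le> \<mu> k j"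
  using line_search_mu_mono[OF \<tau> _ reject[of k], of j] \<mu>0[of k] \<mu>min by linarith

lemma g0_majorant:
  "\<exists>\<rho> D. \<forall>k. norm (\<xi> k) \<le> D \<and>
     (\<forall>z\<in>Gamma_set g \<inter> cball 0 T. g0 z \<le> g0 (x k) + inner (\<xi> k) (z - x k) + \<rho> * norm (z - x k)^2)"
proof -
  obtain R where R: "\<And>k. norm (x k) \<le> R" using iterates_bounded by blast
  define K where "K = Gamma_set g \<inter> cball 0 R"
  define K2 where "K2 = Gamma_set g \<inter> cball 0 (max R T)"
  have "compact K" "compact K2"
    unfolding K_def K2_def by (intro closed_Int_compact closed_Gamma_set compact_cball)+
  moreover have "K2 \<subseteq> Oset" "K \<subseteq> K2" unfolding K_def K2_def using Gamma_subset by auto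
  moreover have "bounded (g0 ` K2)"
    by (intro compact_imp_bounded compact_continuous_image continuous_on_subset[OF g0_cont] \<open>compact K2\<close> \<open>K2 \<subseteq> Oset\<close>)
  ultimately obtain \<rho> D where maj: "\<forall>z\<in>K. \<forall>v\<in>limiting_subdiff g0 z. norm v \<le> D \<and>
      (\<forall>y\<in>K2. g0 y \<le> g0 z + inner v (y - z) + \<rho> * norm (y - z)^2)"
    using upper_C2_uniform_majorant[of K g0 K2] g0_upper_C2 by blast
  have "x k \<in> K" for k using iterate_feasible R unfolding K_def by simp
  then show ?thesis using maj \<xi>_sub unfolding K2_def by (intro exI[of _ \<rho>] exI[of _ D]) fastforce
qed

lemma g_majorant:
  "\<exists>\<rho> D. \<forall>k i. norm (column i (V k)) \<le> D \<and>
     (\<forall>z\<in>cball 0 T. g z $ i \<le> g (x k) $ i + inner (column i (V k)) (z - x k) + \<rho> * norm (z - x k)^2)"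
proof -
  obtain R where R: "\<And>k. norm (x k) \<le> R" using iterates_bounded by blast
  have "\<exists>\<rho> D. \<forall>z\<in>cball 0 R. \<forall>v\<in>limiting_subdiff (\<lambda>z. g z $ i) z. norm v \<le> D \<and>
      (\<forall>y\<in>cball 0 (max R T). g y $ i \<le> g z $ i + inner v (y - z) + \<rho> * norm (y - z)^2)" for i
    using g_upper_C2
    by (intro upper_C2_uniform_majorant compact_imp_bounded compact_continuous_image
        continuous_on_subset[OF g_cont]) auto
  then obtain \<rho>i Di where maj: "\<And>i. \<forall>z\<in>cball 0 R. \<forall>v\<in>limiting_subdiff (\<lambda>z. g z $ i) z. norm v \<le> Di i \<and>
      (\<forall>y\<in>cball 0 (max R T). g y $ i \<le> g z $ i + inner v (y - z) + \<rho>i i * norm (y - z)^2)"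
    by metis
  define \<rho> where "\<rho> = (\<Sum>i\<in>UNIV. \<bar>\<rho>i i\<bar>)"
  define D where "D = (\<Sum>i\<in>UNIV. \<bar>Di i\<bar>)"
  have "\<bar>\<rho>i i\<bar> \<le> \<rho>" "\<bar>Di i\<bar> \<le> D" for i
    unfolding \<rho>_def D_def by (auto intro: member_le_sum)
  then have \<rho>_le: "\<rho>i i \<le> \<rho>" and D_le: "Di i \<le> D" for i by (meson abs_ge_self order_trans)+
  show ?thesis
  proof (rule exI[of _ \<rho>], rule exI[of _ D], intro allI conjI ballI)
    fix k i
    have xk: "x k \<in> cball 0 R" using R by simp
    then show "norm (column i (V k)) \<le> D" using maj[of i] V_sub D_le[of i] by (meson order_trans)
    fix z :: "real^'n" assume "z \<in> cball 0 T"
    then have "z \<in> cball 0 (max R T)" by auto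
    then have "g z $ i \<le> g (x k) $ i + inner (column i (V k)) (z - x k) + \<rho>i i * norm (z - x k)^2"
      using maj[of i] xk V_sub by blast
    also have "\<rho>i i * norm (z - x k)^2 \<le> \<rho> * norm (z - x k)^2" using \<rho>_le by (intro mult_right_mono) auto
    finally show "g z $ i \<le> g (x k) $ i + inner (column i (V k)) (z - x k) + \<rho> * norm (z - x k)^2" by simp
  qed
qed

lemma step_bounded:
  "\<exists>Dy. \<forall>k j. j \<le> jk k \<longrightarrow> norm (y k j - x k) \<le> Dy \<and> norm (xb k j - x k) \<le> Dy"
proof -
  obtain R where R: "0 \<le> R" "\<And>k. norm (x k) \<le> R" using iterates_bounded by blast
  obtain D where D: "\<And>k. norm (\<xi> k) \<le> D" using g0_majorant by blast
  obtain B where B: "\<And>z. norm z \<le> R + 1 \<Longrightarrow> \<bar>\<phi> z\<bar> \<le> B" using convex_on_bounded_on_cball[OF \<phi>_convex] by blast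
  have "0 \<le> B" using B[of 0] R(1) by simp
  have dist: "norm (z - x k) \<le> 2 * (D + 2 * B) / \<mu>min"
    if "j \<le> jk k" "Fmodel g0 \<phi> (x k) (\<xi> k) (Q k j) z \<le> Fmodel g0 \<phi> (x k) (\<xi> k) (Q k j) (x k)" for k j z
  proof (rule Fmodel_descent_dist[OF that(2) _ \<mu>min D])
    show "\<mu>min * norm (z - x k)^2 \<le> inner (z - x k) (Q k j *v (z - x k))"
      using Q_bounds[OF that(1)] \<mu>_ge_\<mu>min[OF that(1)] by (meson mult_right_mono order_trans zero_le_power2)
    show "\<phi> (x k) - \<phi> z \<le> 2 * B * norm (z - x k)"
      using convex_on_lower_linear_bound[OF \<phi>_convex B R(2), of k "z - x k"] by simp
  qed (use \<open>0 \<le> B\<close> in simp)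
  have "Fmodel g0 \<phi> (x k) (\<xi> k) (Q k j) (xb k j) \<le> Fmodel g0 \<phi> (x k) (\<xi> k) (Q k j) (x k)" if "j \<le> jk k" for k j
    using xb_min[OF that, of "x k"] iterate_feasible[of k] by (simp add: Gfun_def Gamma_set_def)
  then show ?thesis using dist descent by blast
qed

lemma sufficient_decrease_if_\<mu>_large:
  "\<exists>\<mu>s. \<forall>k j. j \<le> jk k \<longrightarrow> g (y k j) \<in> nonpos_orthant \<longrightarrow> \<mu>s \<le> \<mu> k j \<longrightarrow>
     g0 (y k j) + \<phi> (y k j) \<le> g0 (x k) + \<phi> (x k) - \<alpha> / 2 * norm (y k j - x k) ^ 2"
proof -
  obtain R where R: "\<And>k. norm (x k) \<le> R" using iterates_bounded by blast
  obtain Dy where Dy: "\<And>k j. j \<le> jk k \<Longrightarrow> norm (y k j - x k) \<le> Dy" using step_bounded by blast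
  obtain \<rho> where maj: "\<And>k z. z \<in> Gamma_set g \<inter> cball 0 (R + Dy) \<Longrightarrow>
      g0 z \<le> g0 (x k) + inner (\<xi> k) (z - x k) + \<rho> * norm (z - x k)^2"
    using g0_majorant[of "R + Dy"] by blast
  have "g0 (y k j) + \<phi> (y k j) \<le> g0 (x k) + \<phi> (x k) - \<alpha> / 2 * norm (y k j - x k) ^ 2"
    if j: "j \<le> jk k" and feasible: "g (y k j) \<in> nonpos_orthant" and large: "2 * \<rho> + \<alpha> \<le> \<mu> k j" for k j
  proof -
    define N where "N = norm (y k j - x k) ^ 2"
    have "norm (y k j) \<le> R + Dy" using Dy[OF j] R[of k] norm_triangle_sub[of "y k j" "x k"] by linarith
    then have "g0 (y k j) \<le> g0 (x k) + inner (\<xi> k) (y k j - x k) + \<rho> * N"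
      using maj feasible unfolding N_def Gamma_set_def by simp
    moreover have "inner (\<xi> k) (y k j - x k) + inner (y k j - x k) (Q k j *v (y k j - x k)) / 2 + \<phi> (y k j) \<le> \<phi> (x k)"
      using descent[OF j] unfolding Fmodel_def by simp
    moreover have "(2 * \<rho> + \<alpha>) * N \<le> inner (y k j - x k) (Q k j *v (y k j - x k))"
      using Q_bounds[OF j] large unfolding N_def by (meson mult_right_mono order_trans zero_le_power2)
    moreover have "(2 * \<rho> + \<alpha>) * N = 2 * (\<rho> * N) + \<alpha> * N" "\<alpha> / 2 * N = \<alpha> * N / 2"
      by (simp_all add: algebra_simps)
    ultimately show ?thesis unfolding N_def[symmetric] by linarith
  qed
  then show ?thesis by blast
qed

lemma feasible_if_L_large:
  "\<exists>Ls. \<forall>k j. j \<le> jk k \<longrightarrow> (\<forall>i. Ls \<le> L k j $ i) \<longrightarrow> g (y k j) \<in> nonpos_orthant"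
proof -
  obtain R where R: "\<And>k. norm (x k) \<le> R" using iterates_bounded by blast
  obtain Dy where Dy: "\<And>k j. j \<le> jk k \<Longrightarrow> norm (y k j - x k) \<le> Dy" using step_bounded by blast
  obtain \<rho> where maj: "\<And>k i z. z \<in> cball 0 (R + Dy) \<Longrightarrow>
      g z $ i \<le> g (x k) $ i + inner (column i (V k)) (z - x k) + \<rho> * norm (z - x k)^2"
    using g_majorant[of "R + Dy"] by blast
  have "g (y k j) $ i \<le> 0" if j: "j \<le> jk k" and large: "\<forall>i. \<beta>C + 2 * \<rho> \<le> L k j $ i" for k j i
  proof -
    define N where "N = norm (y k j - x k) ^ 2"
    have "norm (y k j) \<le> R + Dy" using Dy[OF j] R[of k] norm_triangle_sub[of "y k j" "x k"] by linarith
    then have "g (y k j) $ i \<le> g (x k) $ i + inner (column i (V k)) (y k j - x k) + \<rho> * N"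
      using maj unfolding N_def by simp
    moreover have "g (x k) $ i + inner (column i (V k)) (y k j - x k) + N / 2 * L k j $ i \<le> \<beta>C / 2 * N"
      using component_le_of_violation_bound[OF violation[OF j]] unfolding Gfun_component N_def .
    moreover have "N / 2 * (\<beta>C + 2 * \<rho>) \<le> N / 2 * L k j $ i"
      using large unfolding N_def by (intro mult_left_mono) auto
    moreover have "N / 2 * (\<beta>C + 2 * \<rho>) = \<beta>C / 2 * N + \<rho> * N" by (simp add: algebra_simps)
    ultimately show ?thesis by linarith
  qed
  then show ?thesis unfolding nonpos_orthant_def by blast
qed

lemma accepted_parameters_bounded:
  "\<exists>\<mu>bar Lbar. \<forall>k. \<mu> k (jk k) \<le> \<mu>bar \<and> (\<forall>i. 0 \<le> L k (jk k) $ i \<and> L k (jk k) $ i \<le> Lbar)"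
proof -
  obtain \<mu>s where \<mu>s: "\<And>k j. j \<le> jk k \<Longrightarrow> g (y k j) \<in> nonpos_orthant \<Longrightarrow> \<mu>s \<le> \<mu> k j \<Longrightarrow>
      g0 (y k j) + \<phi> (y k j) \<le> g0 (x k) + \<phi> (x k) - \<alpha> / 2 * norm (y k j - x k) ^ 2"
    using sufficient_decrease_if_\<mu>_large by blast
  obtain Ls where Ls: "\<And>k j. j \<le> jk k \<Longrightarrow> \<forall>i. Ls \<le> L k j $ i \<Longrightarrow> g (y k j) \<in> nonpos_orthant"
    using feasible_if_L_large by blast
  have search: "\<mu> k (jk k) \<le> max (\<mu> k 0) (\<tau> * \<mu>s) \<and>
      (\<exists>c. 1 \<le> c \<and> c \<le> max 1 (\<tau> * Ls / Lmin) \<and> L k (jk k) = c *\<^sub>R L k 0)" for k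
    using line_search_bounded[OF \<tau> Lmin _ reject[of k] \<mu>s Ls] L0 by blast
  have "\<mu> k (jk k) \<le> max \<mu>max (\<tau> * \<mu>s) \<and>
      (\<forall>i. 0 \<le> L k (jk k) $ i \<and> L k (jk k) $ i \<le> max 1 (\<tau> * Ls / Lmin) * Lmax)" for k
  proof -
    obtain c where c: "1 \<le> c" "c \<le> max 1 (\<tau> * Ls / Lmin)" "L k (jk k) = c *\<^sub>R L k 0"
      using search[of k] by blast
    have "0 \<le> L k (jk k) $ i \<and> L k (jk k) $ i \<le> max 1 (\<tau> * Ls / Lmin) * Lmax" for i
      using c L0[of k i] Lmin by (auto intro!: mult_mono)
    then show ?thesis using search[of k] \<mu>0[of k] by auto
  qed
  then show ?thesis by blast
qed

lemma accepted_Q_bounds: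
  "\<exists>c. 0 \<le> c \<and> (\<forall>k d. 0 \<le> inner d (Q k (jk k) *v d) \<and> inner d (Q k (jk k) *v d) \<le> c * norm d ^ 2)"
proof -
  obtain \<mu>bar where \<mu>bar: "\<And>k. \<mu> k (jk k) \<le> \<mu>bar" using accepted_parameters_bounded by blast
  have \<mu>_pos: "0 < \<mu> k (jk k)" for k using \<mu>_ge_\<mu>min[of "jk k" k] \<mu>min by simp
  have "0 \<le> inner d (Q k (jk k) *v d) \<and> inner d (Q k (jk k) *v d) \<le> (\<mu>bar + M) * norm d ^ 2" for k d
  proof -
    have "0 \<le> \<mu> k (jk k) * norm d ^ 2" using \<mu>_pos[of k] by simp
    moreover have "(\<mu> k (jk k) + M) * norm d ^ 2 \<le> (\<mu>bar + M) * norm d ^ 2"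
      using \<mu>bar[of k] by (intro mult_right_mono) auto
    ultimately show ?thesis using Q_bounds[of "jk k" k d] by linarith
  qed
  moreover have "0 \<le> \<mu>bar + M" using \<mu>_pos[of 0] \<mu>bar[of 0] M by linarith
  ultimately show ?thesis by blast
qed

lemma accepted_data_feasible: "data k \<in> Uset \<and> xbar k \<in> Sset g (data k)"
proof -
  obtain c where "\<And>d. 0 \<le> inner d (Q k (jk k) *v d)" using accepted_Q_bounds by blast
  moreover have "0 \<le> L k (jk k) $ i" for i using accepted_parameters_bounded by blast
  ultimately show ?thesis
    using Q_sym[of "jk k" k] xb_feasible[of "jk k" k] unfolding Uset_def Sset_def by simp
qed

lemma accepted_KKT:
  assumes Q_upper: "\<And>d. inner d (Q k (jk k) *v d) \<le> c * norm d ^ 2" and c: "0 \<le> c"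
  shows "\<exists>w v'. w \<in> limiting_subdiff \<phi> (xbar k) \<and>
     (\<forall>z. \<phi> (xbar k) + inner w (z - xbar k) - c / 2 * norm (z - xbar k)^2 \<le> \<phi> z) \<and>
     v' \<in> limiting_normal_cone (Sset g (data k)) (xbar k) \<and> \<xi> k + Q k (jk k) *v (xbar k - x k) + w + v' = 0"
proof -
  have S: "Sset g (data k) = {z. Gfun g z (x k) (V k) (L k (jk k)) \<in> nonpos_orthant}"
    unfolding Sset_def by simp
  have psd: "\<And>d. 0 \<le> inner d (Q k (jk k) *v d)"
    using accepted_data_feasible[of k] unfolding Uset_def by simp
  have "\<And>i. 0 \<le> L k (jk k) $ i" using accepted_data_feasible[of k] unfolding Uset_def by simp
  then have "convex (Sset g (data k))" unfolding S by (rule convex_Gfun_feasible_set)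
  moreover have "\<forall>z\<in>Sset g (data k). Fmodel g0 \<phi> (x k) (\<xi> k) (Q k (jk k)) (xbar k)
      \<le> Fmodel g0 \<phi> (x k) (\<xi> k) (Q k (jk k)) z"
    using xb_min[OF order_refl] unfolding S by blast
  ultimately show ?thesis
    using Fmodel_minimum_KKT[OF Q_sym[OF order_refl] psd Q_upper c \<phi>_convex] accepted_data_feasible by blast
qed

lemma accepted_KKT_bounded:
  "\<exists>Yb. \<forall>k. \<exists>w v'. w \<in> limiting_subdiff \<phi> (xbar k) \<and> v' \<in> limiting_normal_cone (Sset g (data k)) (xbar k) \<and>
     \<xi> k + Q k (jk k) *v (xbar k - x k) + w + v' = 0 \<and> norm v' \<le> Yb"
proof -
  obtain R where R: "\<And>k. norm (x k) \<le> R" using iterates_bounded by blast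
  obtain Dy where Dy: "\<And>k. norm (xbar k - x k) \<le> Dy" using step_bounded by blast
  obtain D where D: "\<And>k. norm (\<xi> k) \<le> D" using g0_majorant by blast
  obtain c where c: "0 \<le> c" and Q: "\<And>k d. 0 \<le> inner d (Q k (jk k) *v d) \<and> inner d (Q k (jk k) *v d) \<le> c * norm d ^ 2"
    using accepted_Q_bounds by blast
  obtain B where B: "\<And>z. norm z \<le> R + Dy + 1 \<Longrightarrow> \<bar>\<phi> z\<bar> \<le> B"
    using convex_on_bounded_on_cball[OF \<phi>_convex] by blast
  define n where "n = real CARD('n) * real CARD('n)"
  have "\<exists>w v'. w \<in> limiting_subdiff \<phi> (xbar k) \<and> v' \<in> limiting_normal_cone (Sset g (data k)) (xbar k) \<and>
     \<xi> k + Q k (jk k) *v (xbar k - x k) + w + v' = 0 \<and> norm v' \<le> D + n * c * Dy + (2 * B + c / 2)" for k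
  proof -
    obtain w v' where w: "w \<in> limiting_subdiff \<phi> (xbar k)"
      and minor: "\<And>z. \<phi> (xbar k) + inner w (z - xbar k) - c / 2 * norm (z - xbar k)^2 \<le> \<phi> z"
      and v': "v' \<in> limiting_normal_cone (Sset g (data k)) (xbar k)"
      and stat: "\<xi> k + Q k (jk k) *v (xbar k - x k) + w + v' = 0"
      using accepted_KKT[OF conjunct2[OF Q] c] by blast
    have "norm (xbar k) \<le> R + Dy" using Dy[of k] R[of k] norm_triangle_sub[of "xbar k" "x k"] by linarith
    then have "norm w \<le> 2 * B + c / 2" using quadratic_minorant_slope_bound[OF minor B] c by simp
    moreover have "norm (Q k (jk k) *v (xbar k - x k)) \<le> n * c * Dy"
    proof -
      have "\<bar>Q k (jk k) $ a $ b\<bar> \<le> c" for a b by (rule symmetric_matrix_entry_bound[OF Q_sym Q]) simp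
      then have "norm (Q k (jk k) *v (xbar k - x k)) \<le> n * c * norm (xbar k - x k)"
        unfolding n_def by (rule norm_matrix_vector_le_entry_bound)
      also have "\<dots> \<le> n * c * Dy" using Dy[of k] c unfolding n_def by (intro mult_left_mono) auto
      finally show ?thesis .
    qed
    moreover have "v' = - (\<xi> k + Q k (jk k) *v (xbar k - x k) + w)"
      using stat by (metis add.commute eq_neg_iff_add_eq_0)
    then have "norm v' = norm (\<xi> k + Q k (jk k) *v (xbar k - x k) + w)" by (simp only: norm_minus_cancel)
    ultimately have "norm v' \<le> D + n * c * Dy + (2 * B + c / 2)"
      using D[of k] norm_triangle_ineq[of "\<xi> k" "Q k (jk k) *v (xbar k - x k)"]
        norm_triangle_ineq[of "\<xi> k + Q k (jk k) *v (xbar k - x k)" w] by linarith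
    then show ?thesis using w v' stat by blast
  qed
  then show ?thesis by blast
qed

lemma bounded_accepted_data: "bounded (range (\<lambda>k. (data k, xbar k)))"
proof -
  obtain R where R: "\<And>k. norm (x k) \<le> R" using iterates_bounded by blast
  obtain Dy where Dy: "\<And>k. norm (xbar k - x k) \<le> Dy" using step_bounded by blast
  obtain D where D: "\<And>k. norm (\<xi> k) \<le> D" using g0_majorant by blast
  obtain Dv where Dv: "\<And>k i. norm (column i (V k)) \<le> Dv" using g_majorant by blast
  obtain Lbar where Lbar: "\<And>k i. 0 \<le> L k (jk k) $ i \<and> L k (jk k) $ i \<le> Lbar"
    using accepted_parameters_bounded by blast
  obtain c where c: "\<And>k d. 0 \<le> inner d (Q k (jk k) *v d) \<and> inner d (Q k (jk k) *v d) \<le> c * norm d ^ 2"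
    using accepted_Q_bounds by blast
  have "norm (L k (jk k)) \<le> real CARD('m) * Lbar" for k
  proof -
    have "norm (L k (jk k)) \<le> (\<Sum>i\<in>UNIV. \<bar>L k (jk k) $ i\<bar>)" by (rule norm_le_l1_cart)
    also have "\<dots> \<le> (\<Sum>i\<in>(UNIV::'m set). Lbar)" using Lbar by (intro sum_mono) (simp add: abs_le_iff)
    finally show ?thesis by simp
  qed
  moreover have "norm (V k) \<le> real CARD('n) * (real CARD('m) * Dv)" for k
  proof (rule norm_matrix_le_entry_bound)
    fix a b
    have "\<bar>V k $ a $ b\<bar> = \<bar>column b (V k) $ a\<bar>" by (simp add: column_def)
    also have "\<dots> \<le> Dv" using component_le_norm_cart Dv order_trans by blast
    finally show "\<bar>V k $ a $ b\<bar> \<le> Dv" .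
  qed
  moreover have "norm (Q k (jk k)) \<le> real CARD('n) * (real CARD('n) * c)" for k
    by (intro norm_matrix_le_entry_bound symmetric_matrix_entry_bound[OF Q_sym c]) simp
  moreover have "norm (xbar k) \<le> R + Dy" for k
    using Dy[of k] R[of k] norm_triangle_sub[of "xbar k" "x k"] by linarith
  ultimately have "bounded (range x)" "bounded (range (\<lambda>k. L k (jk k)))" "bounded (range V)"
    "bounded (range \<xi>)" "bounded (range (\<lambda>k. Q k (jk k)))" "bounded (range xbar)"
    using x_bounded D by (auto intro!: boundedI)
  then have "bounded ((range x \<times> range (\<lambda>k. L k (jk k)) \<times> range V \<times> range \<xi> \<times> range (\<lambda>k. Q k (jk k)))
      \<times> range xbar)"
    by (intro bounded_Times)
  then show ?thesis by (rule bounded_subset) auto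
qed

lemma eventually_accepted_bounded_multipliers:
  "\<exists>\<kappa>. \<forall>\<^sub>F k in sequentially. bounded_multipliers g \<kappa> (data k) (xbar k)"
  using eventually_bounded_multipliers[OF bounded_accepted_data BMP] accepted_data_feasible by simp

end

theorem proposition4p1:
  fixes g0 :: "real^'n \<Rightarrow> real" and g :: "real^'n \<Rightarrow> real^'m" and \<phi> :: "real^'n \<Rightarrow> real"
    and Oset :: "(real^'n) set"
    and \<mu>min \<mu>max Lmin Lmax M \<beta>C \<beta>S \<alpha> \<tau> :: real
    and x \<xi> :: "nat \<Rightarrow> real^'n" and V :: "nat \<Rightarrow> real^'m^'n" and jk :: "nat \<Rightarrow> nat"
    and \<mu> :: "nat \<Rightarrow> nat \<Rightarrow> real" and L :: "nat \<Rightarrow> nat \<Rightarrow> real^'m"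
    and Q :: "nat \<Rightarrow> nat \<Rightarrow> real^'n^'n"
    and y v xb :: "nat \<Rightarrow> nat \<Rightarrow> real^'n" and lam :: "nat \<Rightarrow> nat \<Rightarrow> real^'m"
  assumes
    \<comment> \<open>Assumption 1\<close>
    A1_O: "open Oset" "convex Oset" "Gamma_set g \<subseteq> Oset" "Gamma_set g \<noteq> {}"
  and A1_g0: "loc_lipschitz_on Oset g0" "\<forall>z\<in>Oset. upper_C2_at g0 z"
  and A1_g: "\<forall>i. loc_lipschitz_on UNIV (\<lambda>z. g z $ i) \<and> (\<forall>z. upper_C2_at (\<lambda>z. g z $ i) z)"
  and A1_phi: "convex_on UNIV \<phi>"
  and A1_bdd: "\<exists>c. \<forall>z\<in>Gamma_set g. c \<le> g0 z + \<phi> z"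
    \<comment> \<open>parameters\<close>
  and par: "0 < \<mu>min" "\<mu>min \<le> \<mu>max" "0 < Lmin" "Lmin \<le> Lmax" "0 < M" "0 < \<beta>C" "0 < \<beta>S"
           "0 < \<alpha>" "1 < \<tau>"
    \<comment> \<open>Algorithm iMBA\<close>
  and x0: "x 0 \<in> Gamma_set g"
  and xi_sub: "\<forall>k. \<xi> k \<in> limiting_subdiff g0 (x k)"
  and V_sub: "\<forall>k i. column i (V k) \<in> limiting_subdiff (\<lambda>z. g z $ i) (x k)"
  and mu0: "\<forall>k. \<mu>min \<le> \<mu> k 0 \<and> \<mu> k 0 \<le> \<mu>max"
  and L0: "\<forall>k i. Lmin \<le> L k 0 $ i \<and> L k 0 $ i \<le> Lmax"
  and Qkj: "\<forall>k. \<forall>j\<le>jk k. transpose (Q k j) = Q k j \<and>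
              (\<forall>d. \<mu> k j * norm d ^ 2 \<le> inner d (Q k j *v d) \<and>
                   inner d (Q k j *v d) \<le> (\<mu> k j + M) * norm d ^ 2)"
  and xbar: "\<forall>k. \<forall>j\<le>jk k. Gfun g (xb k j) (x k) (V k) (L k j) \<in> nonpos_orthant \<and>
              (\<forall>z. Gfun g z (x k) (V k) (L k j) \<in> nonpos_orthant \<longrightarrow>
                   Fmodel g0 \<phi> (x k) (\<xi> k) (Q k j) (xb k j) \<le> Fmodel g0 \<phi> (x k) (\<xi> k) (Q k j) z)"
  and inexact_descent: "\<forall>k. \<forall>j\<le>jk k.
              Fmodel g0 \<phi> (x k) (\<xi> k) (Q k j) (y k j) \<le> Fmodel g0 \<phi> (x k) (\<xi> k) (Q k j) (x k)"
  and inexact_sub: "\<forall>k. \<forall>j\<le>jk k. v k j \<in> limiting_subdiff \<phi> (y k j) \<and> (\<forall>i. 0 \<le> lam k j $ i)"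
  and inexact_feas: "\<forall>k. \<forall>j\<le>jk k.
              max (- inner (lam k j) (Gfun g (y k j) (x k) (V k) (L k j))) 0
              + Max (range (\<lambda>i. max (Gfun g (y k j) (x k) (V k) (L k j) $ i) 0))
              \<le> \<beta>C / 2 * norm (y k j - x k) ^ 2"
  and inexact_stat: "\<forall>k. \<forall>j\<le>jk k.
              norm (\<xi> k + Q k j *v (y k j - x k) + v k j + V k *v lam k j
                    + (inner (L k j) (lam k j)) *\<^sub>R (y k j - x k)) \<le> \<beta>S * norm (y k j - x k)"
  and accept: "\<forall>k. g (y k (jk k)) \<in> nonpos_orthant \<and>
              g0 (y k (jk k)) + \<phi> (y k (jk k)) \<le> g0 (x k) + \<phi> (x k) - \<alpha> / 2 * norm (y k (jk k) - x k) ^ 2"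
  and reject: "\<forall>k. \<forall>j<jk k.
              \<not> (g (y k j) \<in> nonpos_orthant \<and>
                 g0 (y k j) + \<phi> (y k j) \<le> g0 (x k) + \<phi> (x k) - \<alpha> / 2 * norm (y k j - x k) ^ 2) \<and>
              (if g (y k j) \<notin> nonpos_orthant
               then L k (Suc j) = \<tau> *\<^sub>R L k j \<and> \<mu> k (Suc j) = \<mu> k j
               else L k (Suc j) = L k j \<and> \<mu> k (Suc j) = \<tau> * \<mu> k j)"
  and update: "\<forall>k. x (Suc k) = y k (jk k)"
    \<comment> \<open>Assumption 2\<close>
  and A2: "\<forall>k. \<forall>j\<le>jk k. metrically_subregular
              (\<lambda>z. {Gfun g z (x k) (V k) (L k j) - w | w. w \<in> nonpos_orthant}) (xb k j) 0"
    \<comment> \<open>Assumption 3\<close>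
  and A3: "bounded (range x)"
    \<comment> \<open>Assumption 4\<close>
  and A4: "\<forall>p\<in>cluster_points (\<lambda>k. ((x k, L k (jk k), V k, \<xi> k, Q k (jk k)), xb k (jk k))).
              partial_BMP g (fst p) (snd p)"
  shows "\<exists>khat. \<exists>\<beta>>0. \<forall>k\<ge>khat. \<exists>l\<in>Mset g \<phi> (x k, L k (jk k), V k, \<xi> k, Q k (jk k)) (xb k (jk k)).
            norm l \<le> \<beta>"
proof -
  interpret iMBA_run g0 g \<phi> Oset \<mu>min \<mu>max Lmin Lmax M \<beta>C \<alpha> \<tau> x \<xi> V jk \<mu> L Q y xb lam
    using A1_O(3) A1_g0 A1_g A1_phi par x0 xi_sub V_sub mu0 L0 Qkj xbar inexact_descent inexact_feas
      accept reject update A3 A4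
    by unfold_locales (auto intro: loc_lipschitz_on_imp_continuous_on)
  obtain \<kappa> khat where BM: "\<And>k. khat \<le> k \<Longrightarrow> bounded_multipliers g \<kappa> (data k) (xbar k)"
    using eventually_accepted_bounded_multipliers unfolding eventually_sequentially by blast
  obtain Yb where KKT: "\<And>k. \<exists>w v'. w \<in> limiting_subdiff \<phi> (xbar k) \<and>
      v' \<in> limiting_normal_cone (Sset g (data k)) (xbar k) \<and>
      \<xi> k + Q k (jk k) *v (xbar k - x k) + w + v' = 0 \<and> norm v' \<le> Yb"
    using accepted_KKT_bounded by blast
  have "0 \<le> Yb" using KKT[of 0] norm_ge_zero order_trans by blast
  have "\<exists>l\<in>Mset g \<phi> (data k) (xbar k). norm l \<le> \<bar>\<kappa>\<bar> * Yb + 1" if k: "khat \<le> k" for k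
  proof -
    obtain w v' where "w \<in> limiting_subdiff \<phi> (xbar k)" "v' \<in> limiting_normal_cone (Sset g (data k)) (xbar k)"
      "\<xi> k + Q k (jk k) *v (xbar k - x k) + w + v' = 0" and v': "norm v' \<le> Yb"
      using KKT by blast
    then obtain l where "l \<in> Mset g \<phi> (data k) (xbar k)" "norm l \<le> \<kappa> * norm v'"
      using Mset_element_of_bounded_multipliers[OF BM[OF k]] by blast
    moreover have "\<kappa> * norm v' \<le> \<bar>\<kappa>\<bar> * Yb"
      using v' by (meson abs_ge_self abs_ge_zero mult_mono norm_ge_zero order_trans)
    ultimately show ?thesis by force
  qed
  moreover have "0 < \<bar>\<kappa>\<bar> * Yb + 1" using \<open>0 \<le> Yb\<close> by (simp add: add_nonneg_pos)
  ultimately show ?thesis by blast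
qed

end
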